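(* Let $H^{\alpha\beta}$ be a smooth symmetric 2-tensor on $\mathbb{R}^{1+3}$ and $\widetilde\Box_g=\Box+H^{\alpha\beta}\partial_\alpha\partial_\beta$. For every multi-index $I$ there is a constant such that for every smooth function $\phi$, $$|\widetilde\Box_gZ^I\phi-\hat Z^I\widetilde\Box_g\phi|\lesssim\frac1{1+t+|q|}\sum_{|K|\le|I|}\ \sum_{|J|+(|K|-1)_+\le|I|}|Z^JH|\,|\partial Z^K\phi|$$ $$+\frac1{1+|q|}\sum_{|K|\le|I|}\Big(\sum_{|J|+(|K|-1)_+\le|I|}|Z^JH|_{LL}+\sum_{|J'|+(|K|-1)_+\le|I|-1}|Z^{J'}H|_{L\mathcal T}+\sum_{|J''|+(|K|-1)_+\le|I|-2}|Z^{J''}H|\Big)|\partial Z^K\phi|,$$ where $(|K|-1)_+=|K|-1$ if $|K|\ge1$ and $0$ if $|K|=0$.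
   Context: Coordinates $(t,x)$, $r=|x|$, $q=r-t$; $\Box=m^{\alpha\beta}\partial_\alpha\partial_\beta=-\partial_t^2+\Delta$; indices raised/lowered with the Minkowski metric $m$. $\mathcal Z=\{\partial_\alpha,\ \Omega_{\alpha\beta}=x_\alpha\partial_\beta-x_\beta\partial_\alpha,\ S=t\partial_t+r\partial_r\}$; $Z^I$ is a product of $|I|$ fields from $\mathcal Z$ (indexed by the multi-index $I$). For $Z\in\mathcal Z$, $[Z,\Box]=-c_Z\Box$ with $c_S=2$ and $c_Z=0$ otherwise; $\hat Z=Z+c_Z$ and $\hat Z^I$ is the corresponding product. Null frame $L=\partial_t+\partial_r$, $\underline L=\partial_t-\partial_r$, $S_1,S_2$ orthonormal tangent to spheres; $\mathcal T=\{L,S_1,S_2\}$. For a 2-tensor $p$: $|p|_{LL}=|p_{\alpha\beta}L^\alpha L^\beta|$, $|p|_{L\mathcal T}=\sum_{T\in\mathcal T}|p_{\alpha\beta}L^\alpha T^\beta|$ (lower indices via $m$), $|p|$ the sum of absolute values of components; $|\partial f|=\sum_\alpha|\partial_\alpha f|$. $A\lesssim B$ means $A\le CB$ with $C$ independent of $\phi$, $H$ and the point. *)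

theory Defs
  imports "HOL-Analysis.Analysis"
begin

text \<open>Spacetime R^{1+3} is real^4; index 0 is time t, indices 1,2,3 are space x.\<close>

type_synonym pt = "real ^ 4"

definition tcoord :: "pt \<Rightarrow> real" where "tcoord p = p $ 0"

definition rad :: "pt \<Rightarrow> real" where
  "rad p = sqrt (\<Sum>i\<in>UNIV - {0::4}. (p $ i)\<^sup>2)"

definition qcoord :: "pt \<Rightarrow> real" where "qcoord p = rad p - tcoord p"

definition mdiag :: "4 \<Rightarrow> real" where "mdiag a = (if a = 0 then -1 else 1)"

definition pd :: "4 \<Rightarrow> (pt \<Rightarrow> real) \<Rightarrow> pt \<Rightarrow> real" where
  "pd a f p = deriv (\<lambda>s. f (p + s *\<^sub>R axis a 1)) 0"

definition smooth :: "(pt \<Rightarrow> real) \<Rightarrow> bool" where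
  "smooth f \<longleftrightarrow> (\<forall>ds::4 list. \<forall>p. foldr pd ds f differentiable (at p))"

text \<open>The vector fields: partial_a, Omega_ab = x_a partial_b - x_b partial_a (a<b), scaling S.\<close>
datatype zf = Dz 4 | Om 4 4 | Sc

definition Zset :: "zf set" where
  "Zset = range Dz \<union> {Om a b | a b. a < b} \<union> {Sc}"

definition xlow :: "4 \<Rightarrow> pt \<Rightarrow> real" where "xlow a p = mdiag a * p $ a"

fun apZ :: "zf \<Rightarrow> (pt \<Rightarrow> real) \<Rightarrow> pt \<Rightarrow> real" where
  "apZ (Dz a) f p = pd a f p"
| "apZ (Om a b) f p = xlow a p * pd b f p - xlow b p * pd a f p"
| "apZ Sc f p = (\<Sum>a\<in>UNIV. p $ a * pd a f p)"

definition cZ :: "zf \<Rightarrow> real" where "cZ Z = (if Z = Sc then 2 else 0)"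

definition hatZ :: "zf \<Rightarrow> (pt \<Rightarrow> real) \<Rightarrow> pt \<Rightarrow> real" where
  "hatZ Z f p = apZ Z f p + cZ Z * f p"

text \<open>Z^I and hat Z^I for a multi-index I (a list of fields, applied right to left).\<close>
definition ZI :: "zf list \<Rightarrow> (pt \<Rightarrow> real) \<Rightarrow> pt \<Rightarrow> real" where
  "ZI I f = foldr apZ I f"

definition hatZI :: "zf list \<Rightarrow> (pt \<Rightarrow> real) \<Rightarrow> pt \<Rightarrow> real" where
  "hatZI I f = foldr hatZ I f"

definition MI :: "nat \<Rightarrow> zf list set" where
  "MI n = {J. set J \<subseteq> Zset \<and> length J \<le> n}"

definition box :: "(pt \<Rightarrow> real) \<Rightarrow> pt \<Rightarrow> real" where
  "box f p = (\<Sum>a\<in>UNIV. mdiag a * pd a (pd a f) p)"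

definition boxt :: "(4 \<Rightarrow> 4 \<Rightarrow> pt \<Rightarrow> real) \<Rightarrow> (pt \<Rightarrow> real) \<Rightarrow> pt \<Rightarrow> real" where
  "boxt H f p = box f p + (\<Sum>a\<in>UNIV. \<Sum>b\<in>UNIV. H a b p * pd a (pd b f) p)"

definition ZH :: "zf list \<Rightarrow> (4 \<Rightarrow> 4 \<Rightarrow> pt \<Rightarrow> real) \<Rightarrow> 4 \<Rightarrow> 4 \<Rightarrow> pt \<Rightarrow> real" where
  "ZH J H a b = ZI J (H a b)"

definition tnorm :: "(4 \<Rightarrow> 4 \<Rightarrow> pt \<Rightarrow> real) \<Rightarrow> pt \<Rightarrow> real" where
  "tnorm P p = (\<Sum>a\<in>UNIV. \<Sum>b\<in>UNIV. \<bar>P a b p\<bar>)"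

definition gradnorm :: "(pt \<Rightarrow> real) \<Rightarrow> pt \<Rightarrow> real" where
  "gradnorm f p = (\<Sum>a\<in>UNIV. \<bar>pd a f p\<bar>)"

text \<open>Null frame. omega = x/r (convention e_1 at r = 0), L = partial_t + partial_r.\<close>
definition omega :: "pt \<Rightarrow> 4 \<Rightarrow> real" where
  "omega p i = (if rad p = 0 then (if i = 1 then 1 else 0) else p $ i / rad p)"

definition Lvec :: "pt \<Rightarrow> pt" where
  "Lvec p = (\<chi> i. if i = 0 then 1 else omega p i)"

definition sframe :: "(pt \<Rightarrow> pt) \<Rightarrow> (pt \<Rightarrow> pt) \<Rightarrow> bool" where
  "sframe S1 S2 \<longleftrightarrow> (\<forall>p. S1 p $ 0 = 0 \<and> S2 p $ 0 = 0 \<and> norm (S1 p) = 1 \<and> norm (S2 p) = 1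
      \<and> inner (S1 p) (S2 p) = 0 \<and> inner (S1 p) (Lvec p) = 0 \<and> inner (S2 p) (Lvec p) = 0)"

definition contr :: "(4 \<Rightarrow> 4 \<Rightarrow> pt \<Rightarrow> real) \<Rightarrow> pt \<Rightarrow> pt \<Rightarrow> pt \<Rightarrow> real" where
  "contr P p X Y = (\<Sum>a\<in>UNIV. \<Sum>b\<in>UNIV. mdiag a * mdiag b * P a b p * X $ a * Y $ b)"

definition normLL :: "(4 \<Rightarrow> 4 \<Rightarrow> pt \<Rightarrow> real) \<Rightarrow> pt \<Rightarrow> real" where
  "normLL P p = \<bar>contr P p (Lvec p) (Lvec p)\<bar>"

definition normLT :: "(pt \<Rightarrow> pt) \<Rightarrow> (pt \<Rightarrow> pt) \<Rightarrow> (4 \<Rightarrow> 4 \<Rightarrow> pt \<Rightarrow> real) \<Rightarrow> pt \<Rightarrow> real" where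
  "normLT S1 S2 P p = \<bar>contr P p (Lvec p) (Lvec p)\<bar> + \<bar>contr P p (Lvec p) (S1 p)\<bar>
      + \<bar>contr P p (Lvec p) (S2 p)\<bar>"

end

(* The hatted fields commute exactly with Box, so only the
   H-part matters. Commuting one field through H^ab d_a d_b gives H^ab d_a d_b (Z psi) plus the
   modified Lie derivative of H contracted with d_a d_b psi; that Lie derivative consists of Z(H)
   and a zeroth-order algebraic action of Z on H. Iterating, hatZ^I (H^ab d_a d_b phi) is a sum
   over all ways of letting each field of I hit phi, differentiate H, or act algebraically on H;
   the term in which every field hits phi is H^ab d_a d_b Z^I phi and cancels.
   Each remaining term P^ab d_a d_b psi is estimated in the null frame. The fields Z control every
   first derivative with the weight 1/(1+|q|), and derivatives along L or tangent to the spheres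
   with the weight 1/(1+t+|q|). Hence only the Lbar Lbar component of d d psi is bad, and it is
   paired with the LL component of P. A single algebraic action of a rotation or boost turns the
   LL component of a symmetric tensor into LT components; after two or more only the full norm is
   left. This accounts for the shifts by one and by two in the second line of the estimate. *)

theory Submission
  imports Defs
begin

lemma has_real_derivative_along_axis:
  fixes f :: "pt \<Rightarrow> real"
  assumes "(f has_derivative F) (at p)"
  shows "((\<lambda>s. f (p + s *\<^sub>R axis a 1)) has_real_derivative F (axis a 1)) (at 0)"
proof -
  have "((\<lambda>s. p + s *\<^sub>R axis a 1) has_derivative (\<lambda>s. s *\<^sub>R axis a (1::real))) (at (0::real))"
    by (auto intro!: derivative_eq_intros)
  moreover have "(f has_derivative F) (at (p + 0 *\<^sub>R axis a 1))" using assms by simp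
  ultimately have "((\<lambda>s. f (p + s *\<^sub>R axis a 1)) has_derivative (\<lambda>s. F (s *\<^sub>R axis a 1))) (at 0)"
    by (rule has_derivative_compose)
  moreover have "(\<lambda>s. F (s *\<^sub>R axis a 1)) = (*) (F (axis a 1))"
    using has_derivative_linear[OF assms] by (auto simp: linear_scale)
  ultimately show ?thesis by (simp add: has_field_derivative_def)
qed

lemma pd_eq_has_derivative:
  assumes "(f has_derivative F) (at p)"
  shows "pd a f p = F (axis a 1)"
  unfolding pd_def by (rule DERIV_imp_deriv[OF has_real_derivative_along_axis[OF assms]])

lemma differentiable_on_UNIV_imp_at: "f differentiable_on UNIV \<Longrightarrow> f differentiable (at p)"
  by (simp add: differentiable_on_eq_differentiable_at)

lemma has_real_derivative_pd:
  assumes "f differentiable_on UNIV"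
  shows "((\<lambda>s. f (q + s *\<^sub>R axis a 1)) has_real_derivative pd a f (q + s *\<^sub>R axis a 1)) (at s)"
proof -
  obtain F where F: "(f has_derivative F) (at (q + s *\<^sub>R axis a 1))"
    using assms[THEN differentiable_on_UNIV_imp_at, unfolded differentiable_def] by blast
  have "((\<lambda>x. f ((q + s *\<^sub>R axis a 1) + x *\<^sub>R axis a 1)) has_real_derivative pd a f (q + s *\<^sub>R axis a 1)) (at 0)"
    using has_real_derivative_along_axis[OF F] pd_eq_has_derivative[OF F] by simp
  then have "((\<lambda>x. f (q + (x + s) *\<^sub>R axis a 1)) has_real_derivative pd a f (q + s *\<^sub>R axis a 1)) (at 0)"
    by (simp add: algebra_simps scaleR_add_left)
  then show ?thesis using DERIV_shift[of "\<lambda>x. f (q + x *\<^sub>R axis a 1)" _ 0 s] by simp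
qed

lemma pd_add:
  assumes "f differentiable_on UNIV" "g differentiable_on UNIV"
  shows "pd a (\<lambda>q. f q + g q) = (\<lambda>q. pd a f q + pd a g q)"
proof
  fix p
  obtain F G where F: "(f has_derivative F) (at p)" and G: "(g has_derivative G) (at p)"
    using assms[THEN differentiable_on_UNIV_imp_at, unfolded differentiable_def] by blast
  show "pd a (\<lambda>q. f q + g q) p = pd a f p + pd a g p"
    using pd_eq_has_derivative[OF has_derivative_add[OF F G]]
      pd_eq_has_derivative[OF F] pd_eq_has_derivative[OF G] by simp
qed

lemma pd_mult:
  assumes "f differentiable_on UNIV" "g differentiable_on UNIV"
  shows "pd a (\<lambda>q. f q * g q) = (\<lambda>q. pd a f q * g q + f q * pd a g q)"
proof
  fix p
  obtain F G where F: "(f has_derivative F) (at p)" and G: "(g has_derivative G) (at p)"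
    using assms[THEN differentiable_on_UNIV_imp_at, unfolded differentiable_def] by blast
  show "pd a (\<lambda>q. f q * g q) p = pd a f p * g p + f p * pd a g p"
    using pd_eq_has_derivative[OF has_derivative_mult[OF F G]]
      pd_eq_has_derivative[OF F] pd_eq_has_derivative[OF G] by simp
qed

lemma pd_const: "pd a (\<lambda>q. c) = (\<lambda>q. 0)"
  using pd_eq_has_derivative[OF has_derivative_const] by auto

lemma pd_coord: "pd a (\<lambda>q. q $ b) = (\<lambda>q. if a = b then 1 else 0)"
  using pd_eq_has_derivative[OF bounded_linear_imp_has_derivative[OF bounded_linear_vec_nth]]
  by (auto simp: axis_def)

lemma pd_cmult: "f differentiable_on UNIV \<Longrightarrow> pd a (\<lambda>q. c * f q) = (\<lambda>q. c * pd a f q)"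
  using pd_mult[of "\<lambda>q. c" f a] by (simp add: pd_const)

lemma pd_minus: "f differentiable_on UNIV \<Longrightarrow> pd a (\<lambda>q. - f q) = (\<lambda>q. - pd a f q)"
  using pd_cmult[of f a "-1"] by simp

lemma pd_diff:
  assumes "f differentiable_on UNIV" "g differentiable_on UNIV"
  shows "pd a (\<lambda>q. f q - g q) = (\<lambda>q. pd a f q - pd a g q)"
  using pd_add[OF assms(1), of "\<lambda>q. (-1) * g q" a] pd_cmult[OF assms(2), of a "-1"] assms by simp

lemma differentiable_on_sum [derivative_intros]:
  "finite A \<Longrightarrow> (\<And>i. i \<in> A \<Longrightarrow> f i differentiable_on S) \<Longrightarrow>
   (\<lambda>q. \<Sum>i\<in>A. f i q) differentiable_on S"
  by (simp add: differentiable_on_def differentiable_sum)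

lemma pd_sum:
  "finite A \<Longrightarrow> (\<And>i. i \<in> A \<Longrightarrow> f i differentiable_on UNIV) \<Longrightarrow>
   pd a (\<lambda>q. \<Sum>i\<in>A. f i q) = (\<lambda>q. \<Sum>i\<in>A. pd a (f i) q)"
proof (induction A rule: finite_induct)
  case (insert x F)
  then show ?case by (simp add: pd_add differentiable_on_sum)
qed (simp add: pd_const)

definition partials_differentiable :: "nat \<Rightarrow> (pt \<Rightarrow> real) \<Rightarrow> bool" where
  "partials_differentiable n f \<longleftrightarrow> (\<forall>ds. length ds \<le> n \<longrightarrow> foldr pd ds f differentiable_on UNIV)"

lemma partials_differentiable_0: "partials_differentiable 0 f \<longleftrightarrow> f differentiable_on UNIV"
  unfolding partials_differentiable_def by auto

lemma partials_differentiable_Suc: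
  "partials_differentiable (Suc n) f \<longleftrightarrow>
     f differentiable_on UNIV \<and> (\<forall>a. partials_differentiable n (pd a f))"
proof
  assume h: "partials_differentiable (Suc n) f"
  show "f differentiable_on UNIV \<and> (\<forall>a. partials_differentiable n (pd a f))"
    unfolding partials_differentiable_def
    using h[unfolded partials_differentiable_def, rule_format, of "[]"]
      h[unfolded partials_differentiable_def, rule_format, of "_ @ [_]"] by auto
next
  assume h: "f differentiable_on UNIV \<and> (\<forall>a. partials_differentiable n (pd a f))"
  show "partials_differentiable (Suc n) f" unfolding partials_differentiable_def
  proof (intro allI impI)
    fix ds :: "4 list" assume l: "length ds \<le> Suc n"
    show "foldr pd ds f differentiable_on UNIV"
    proof (cases ds rule: rev_exhaust)
      case (snoc ys a)
      then show ?thesis using h l unfolding partials_differentiable_def by simp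
    qed (use h in simp)
  qed
qed

lemma smooth_iff_partials_differentiable: "smooth f \<longleftrightarrow> (\<forall>n. partials_differentiable n f)"
  unfolding smooth_def partials_differentiable_def differentiable_on_def by auto

lemma partials_differentiable_imp_differentiable_on:
  "partials_differentiable n f \<Longrightarrow> f differentiable_on UNIV"
  unfolding partials_differentiable_def by (metis foldr_Nil id_apply le0 list.size(3))

lemma partials_differentiable_const: "partials_differentiable n (\<lambda>q. c)"
  by (induction n arbitrary: c) (simp_all add: partials_differentiable_0 partials_differentiable_Suc pd_const)

lemma partials_differentiable_coord: "partials_differentiable n (\<lambda>q. q $ b)"
  by (induction n)
    (auto simp: partials_differentiable_0 partials_differentiable_Suc pd_coord
      partials_differentiable_const bounded_linear_imp_differentiable_on bounded_linear_vec_nth)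

lemma partials_differentiable_add:
  "partials_differentiable n f \<Longrightarrow> partials_differentiable n g \<Longrightarrow>
   partials_differentiable n (\<lambda>q. f q + g q)"
proof (induction n arbitrary: f g)
  case (Suc n)
  then show ?case
    using partials_differentiable_imp_differentiable_on[OF Suc.prems(1)]
      partials_differentiable_imp_differentiable_on[OF Suc.prems(2)]
    by (auto simp: partials_differentiable_Suc pd_add)
qed (simp add: partials_differentiable_0)

lemma partials_differentiable_mult:
  "partials_differentiable n f \<Longrightarrow> partials_differentiable n g \<Longrightarrow>
   partials_differentiable n (\<lambda>q. f q * g q)"
proof (induction n arbitrary: f g)
  case (Suc n)
  have df: "f differentiable_on UNIV" and dg: "g differentiable_on UNIV"
    using Suc.prems partials_differentiable_imp_differentiable_on by blast+
  have lower: "partials_differentiable n f" "partials_differentiable n g"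
    using Suc.prems partials_differentiable_def by auto
  have "partials_differentiable n (\<lambda>q. pd a f q * g q + f q * pd a g q)" for a
    using Suc lower by (intro partials_differentiable_add) (auto simp: partials_differentiable_Suc)
  then show ?case by (simp add: partials_differentiable_Suc pd_mult[OF df dg] df dg)
qed (simp add: partials_differentiable_0)

lemma smooth_const [simp]: "smooth (\<lambda>q. c)"
  by (simp add: smooth_iff_partials_differentiable partials_differentiable_const)

lemma smooth_coord [simp]: "smooth (\<lambda>q. q $ b)"
  by (simp add: smooth_iff_partials_differentiable partials_differentiable_coord)

lemma smooth_add: "smooth f \<Longrightarrow> smooth g \<Longrightarrow> smooth (\<lambda>q. f q + g q)"
  by (simp add: smooth_iff_partials_differentiable partials_differentiable_add)

lemma smooth_mult: "smooth f \<Longrightarrow> smooth g \<Longrightarrow> smooth (\<lambda>q. f q * g q)"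
  by (simp add: smooth_iff_partials_differentiable partials_differentiable_mult)

lemma smooth_cmult: "smooth f \<Longrightarrow> smooth (\<lambda>q. c * f q)"
  by (simp add: smooth_mult)

lemma smooth_diff: "smooth f \<Longrightarrow> smooth g \<Longrightarrow> smooth (\<lambda>q. f q - g q)"
  using smooth_add[of f "\<lambda>q. (-1) * g q"] smooth_cmult[of g "-1"] by simp

lemma smooth_sum: "finite A \<Longrightarrow> (\<And>i. i \<in> A \<Longrightarrow> smooth (f i)) \<Longrightarrow> smooth (\<lambda>q. \<Sum>i\<in>A. f i q)"
  by (induction A rule: finite_induct) (auto intro: smooth_add)

lemma smooth_pd: "smooth f \<Longrightarrow> smooth (pd a f)"
  by (meson smooth_iff_partials_differentiable partials_differentiable_Suc)

lemma smooth_imp_differentiable_at: "smooth f \<Longrightarrow> f differentiable (at p)"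
  unfolding smooth_def by (metis foldr_Nil id_apply)

lemma smooth_imp_differentiable_on: "smooth f \<Longrightarrow> f differentiable_on UNIV"
  using smooth_iff_partials_differentiable partials_differentiable_imp_differentiable_on by blast

section \<open>Symmetry of second partial derivatives\<close>

lemma second_difference_mean_value:
  assumes "f differentiable_on UNIV" "0 < h"
  obtains z where "0 < z" "z < h"
    "f (p + h *\<^sub>R axis a 1 + h *\<^sub>R axis b 1) - f (p + h *\<^sub>R axis a 1) - f (p + h *\<^sub>R axis b 1) + f p
       = h * (pd a f (p + (h *\<^sub>R axis b 1 + z *\<^sub>R axis a 1)) - pd a f (p + z *\<^sub>R axis a 1))"
proof -
  define \<phi> where "\<phi> s = f ((p + h *\<^sub>R axis b 1) + s *\<^sub>R axis a 1) - f (p + s *\<^sub>R axis a 1)" for s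
  define \<phi>' where "\<phi>' s = pd a f (p + h *\<^sub>R axis b 1 + s *\<^sub>R axis a 1) - pd a f (p + s *\<^sub>R axis a 1)" for s
  have "DERIV \<phi> s :> \<phi>' s" for s
    unfolding \<phi>_def \<phi>'_def by (intro DERIV_diff has_real_derivative_pd assms(1))
  from MVT2[OF assms(2) this] obtain z where "0 < z" "z < h" "\<phi> h - \<phi> 0 = (h - 0) * \<phi>' z"
    by blast
  then show ?thesis by (intro that) (auto simp: \<phi>_def \<phi>'_def algebra_simps)
qed

lemma second_difference_estimate:
  fixes f :: "pt \<Rightarrow> real"
  assumes df: "f differentiable_on UNIV" and h: "0 < h" and G: "linear G" and e: "0 \<le> e"
    and taylor: "\<And>y. norm (y - p) \<le> 2 * h \<Longrightarrow> \<bar>pd a f y - pd a f p - G (y - p)\<bar> \<le> e * norm (y - p)"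
  shows "\<bar>(f (p + h *\<^sub>R axis a 1 + h *\<^sub>R axis b 1) - f (p + h *\<^sub>R axis a 1)
      - f (p + h *\<^sub>R axis b 1) + f p) / h\<^sup>2 - G (axis b 1)\<bar> \<le> 3 * e"
proof -
  define ea :: pt where "ea = axis a 1"
  define eb :: pt where "eb = axis b 1"
  define g where "g = pd a f"
  obtain z where z: "0 < z" "z < h" and mv:
      "f (p + h *\<^sub>R ea + h *\<^sub>R eb) - f (p + h *\<^sub>R ea) - f (p + h *\<^sub>R eb) + f p
         = h * (g (p + (h *\<^sub>R eb + z *\<^sub>R ea)) - g (p + z *\<^sub>R ea))"
    using second_difference_mean_value[OF df h, of p a b] unfolding g_def ea_def eb_def by blast
  define v1 where "v1 = h *\<^sub>R eb + z *\<^sub>R ea"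
  define v2 where "v2 = z *\<^sub>R ea"
  have n1: "norm v1 \<le> 2 * h"
    using norm_triangle_ineq[of "h *\<^sub>R eb" "z *\<^sub>R ea"] h z by (simp add: v1_def ea_def eb_def)
  have n2: "norm v2 \<le> h" using z by (simp add: v2_def ea_def)
  have "\<bar>g (p + v1) - g p - G v1\<bar> \<le> e * norm v1" using taylor[of "p + v1"] n1 by (simp add: g_def)
  also have "\<dots> \<le> e * (2 * h)" using n1 e by (intro mult_left_mono) auto
  finally have e1: "\<bar>g (p + v1) - g p - G v1\<bar> \<le> e * (2 * h)" .
  have "\<bar>g (p + v2) - g p - G v2\<bar> \<le> e * norm v2" using taylor[of "p + v2"] n2 h by (simp add: g_def)
  also have "\<dots> \<le> e * h" using n2 e by (intro mult_left_mono) auto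
  finally have e2: "\<bar>g (p + v2) - g p - G v2\<bar> \<le> e * h" .
  have "G v1 - G v2 = h * G eb"
    using G by (simp add: v1_def v2_def linear_add linear_scale)
  with e1 e2 have "\<bar>(g (p + v1) - g (p + v2)) - h * G eb\<bar> \<le> 3 * e * h" by linarith
  moreover have "(f (p + h *\<^sub>R ea + h *\<^sub>R eb) - f (p + h *\<^sub>R ea) - f (p + h *\<^sub>R eb) + f p) / h\<^sup>2 - G eb
      = ((g (p + v1) - g (p + v2)) - h * G eb) / h"
    using mv h unfolding v1_def v2_def by (simp add: power2_eq_square diff_divide_distrib)
  ultimately show ?thesis using h unfolding ea_def eb_def by (simp add: abs_divide divide_le_eq)
qed

lemma second_difference_tendsto:
  assumes df: "f differentiable_on UNIV" and dg: "pd a f differentiable (at p)"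
  shows "((\<lambda>h. (f (p + h *\<^sub>R axis a 1 + h *\<^sub>R axis b 1) - f (p + h *\<^sub>R axis a 1)
           - f (p + h *\<^sub>R axis b 1) + f p) / h\<^sup>2) \<longlongrightarrow> pd b (pd a f) p) (at_right 0)"
    (is "(?D \<longlongrightarrow> _) _")
proof -
  obtain G where G: "(pd a f has_derivative G) (at p)" using dg unfolding differentiable_def by blast
  have estimate: "\<forall>\<^sub>F h in at_right 0. \<bar>?D h - G (axis b 1)\<bar> \<le> 3 * e" if e: "e > 0" for e
  proof -
    obtain d where d: "d > 0" and taylor: "\<And>y. norm (y - p) < d \<Longrightarrow>
        norm (pd a f y - pd a f p - G (y - p)) \<le> e * norm (y - p)"
      using G e unfolding has_derivative_at_alt by blast
    have "\<bar>?D h - G (axis b 1)\<bar> \<le> 3 * e" if h: "0 < h" "h < d/2" for h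
      using taylor h e by (intro second_difference_estimate[OF df h(1) has_derivative_linear[OF G]]) auto
    then show ?thesis unfolding eventually_at_right_field using d by (intro exI[of _ "d/2"]) auto
  qed
  have "(?D \<longlongrightarrow> G (axis b 1)) (at_right 0)"
    unfolding tendsto_iff dist_real_def
  proof (intro allI impI)
    fix e :: real assume "e > 0"
    then show "\<forall>\<^sub>F h in at_right 0. \<bar>?D h - G (axis b 1)\<bar> < e"
      using estimate[of "e/6"] by (auto elim: eventually_mono)
  qed
  then show ?thesis using pd_eq_has_derivative[OF G] by simp
qed

lemma pd_pd_commute:
  assumes "f differentiable_on UNIV" "pd a f differentiable (at p)" "pd b f differentiable (at p)"
  shows "pd b (pd a f) p = pd a (pd b f) p"
proof -
  have swap: "(\<lambda>h. (f (p + h *\<^sub>R axis b 1 + h *\<^sub>R axis a 1) - f (p + h *\<^sub>R axis b 1)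
           - f (p + h *\<^sub>R axis a 1) + f p) / h\<^sup>2) =
        (\<lambda>h. (f (p + h *\<^sub>R axis a 1 + h *\<^sub>R axis b 1) - f (p + h *\<^sub>R axis a 1)
           - f (p + h *\<^sub>R axis b 1) + f p) / h\<^sup>2)"
    by (simp add: algebra_simps)
  show ?thesis
    using tendsto_unique[OF trivial_limit_at_right_real second_difference_tendsto[OF assms(1,2), of b]
        second_difference_tendsto[OF assms(1,3), of a, unfolded swap]] .
qed

lemma smooth_pd_pd_commute: "smooth f \<Longrightarrow> pd b (pd a f) = pd a (pd b f)"
  by (intro ext pd_pd_commute smooth_imp_differentiable_on smooth_imp_differentiable_at smooth_pd)

lemma differentiable_on_coord [simp]: "(\<lambda>q. q $ b) differentiable_on S"
  by (simp add: bounded_linear_imp_differentiable_on bounded_linear_vec_nth)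

lemma sum_UNIV_4: "sum f (UNIV :: 4 set) = f 0 + f 1 + f 2 + f 3"
proof -
  have "sum f (UNIV :: 4 set) = f 1 + f 2 + f 3 + f 4" by (rule sum_4)
  moreover have "(4::4) = 0" by simp
  ultimately show ?thesis by (simp add: algebra_simps)
qed

lemma apZ_Dz_eq: "apZ (Dz a) f = pd a f"
  by auto

lemma apZ_Om_eq: "apZ (Om a b) f = (\<lambda>p. (mdiag a * p $ a) * pd b f p - (mdiag b * p $ b) * pd a f p)"
  by (auto simp: xlow_def)

lemma apZ_Sc_eq: "apZ Sc f = (\<lambda>p. \<Sum>a\<in>UNIV. p $ a * pd a f p)"
  by auto

lemma hatZ_eq: "hatZ Z f = (\<lambda>p. apZ Z f p + cZ Z * f p)"
  by (auto simp: hatZ_def)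

lemma smooth_apZ: "smooth f \<Longrightarrow> smooth (apZ Z f)"
  by (cases Z) (auto simp: apZ_Dz_eq apZ_Om_eq apZ_Sc_eq
      intro!: smooth_pd smooth_diff smooth_mult smooth_cmult smooth_sum)

lemma smooth_hatZ: "smooth f \<Longrightarrow> smooth (hatZ Z f)"
  unfolding hatZ_eq by (intro smooth_add smooth_cmult smooth_apZ)

lemma smooth_ZI: "smooth f \<Longrightarrow> smooth (ZI I f)"
  unfolding ZI_def by (induction I) (auto simp: smooth_apZ)

lemma smooth_hatZI: "smooth f \<Longrightarrow> smooth (hatZI I f)"
  unfolding hatZI_def by (induction I) (auto simp: smooth_hatZ)

lemma ZI_Cons: "ZI (Z # K) f = apZ Z (ZI K f)"
  by (simp add: ZI_def)

lemma apZ_add: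
  "f differentiable_on UNIV \<Longrightarrow> g differentiable_on UNIV \<Longrightarrow>
   apZ Z (\<lambda>q. f q + g q) = (\<lambda>q. apZ Z f q + apZ Z g q)"
  by (cases Z) (auto simp: pd_add algebra_simps sum.distrib xlow_def)

lemma apZ_cmult: "f differentiable_on UNIV \<Longrightarrow> apZ Z (\<lambda>q. c * f q) = (\<lambda>q. c * apZ Z f q)"
  by (cases Z) (auto simp: pd_cmult algebra_simps sum_distrib_left xlow_def)

lemma apZ_diff:
  assumes "f differentiable_on UNIV" "g differentiable_on UNIV"
  shows "apZ Z (\<lambda>q. f q - g q) = (\<lambda>q. apZ Z f q - apZ Z g q)"
  using apZ_add[OF assms(1), of "\<lambda>q. (-1) * g q" Z] apZ_cmult[OF assms(2), of Z "-1"] assms(2)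
  by simp

lemma apZ_const: "apZ Z (\<lambda>q. c) = (\<lambda>q. 0)"
  by (cases Z) (auto simp: pd_const)

lemma apZ_sum:
  "finite A \<Longrightarrow> (\<And>i. i \<in> A \<Longrightarrow> f i differentiable_on UNIV) \<Longrightarrow>
   apZ Z (\<lambda>q. \<Sum>i\<in>A. f i q) = (\<lambda>q. \<Sum>i\<in>A. apZ Z (f i) q)"
proof (induction A rule: finite_induct)
  case (insert x F)
  then show ?case by (simp add: apZ_add differentiable_on_sum)
qed (simp add: apZ_const)

lemma apZ_mult:
  assumes "f differentiable_on UNIV" "g differentiable_on UNIV"
  shows "apZ Z (\<lambda>q. f q * g q) = (\<lambda>q. apZ Z f q * g q + f q * apZ Z g q)"
proof (cases Z)
  case Sc
  then show ?thesis
    by (auto simp: pd_mult[OF assms] sum.distrib sum_distrib_left sum_distrib_right algebra_simps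
        intro!: ext sum.cong)
qed (auto simp: pd_mult[OF assms] algebra_simps xlow_def)

lemma hatZ_add:
  "f differentiable_on UNIV \<Longrightarrow> g differentiable_on UNIV \<Longrightarrow>
   hatZ Z (\<lambda>q. f q + g q) = (\<lambda>q. hatZ Z f q + hatZ Z g q)"
  by (simp add: hatZ_eq apZ_add algebra_simps)

lemma hatZI_add:
  "smooth f \<Longrightarrow> smooth g \<Longrightarrow> hatZI I (\<lambda>q. f q + g q) = (\<lambda>q. hatZI I f q + hatZI I g q)"
proof (induction I)
  case (Cons Z I)
  then show ?case
    by (simp add: hatZI_def hatZ_add smooth_imp_differentiable_on smooth_hatZI[unfolded hatZI_def])
qed (simp add: hatZI_def)

fun pd_commutator :: "zf \<Rightarrow> 4 \<Rightarrow> (pt \<Rightarrow> real) \<Rightarrow> pt \<Rightarrow> real" where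
  "pd_commutator (Dz c) b f q = 0"
| "pd_commutator (Om c d) b f q =
     (if b = c then mdiag c * pd d f q else 0) - (if b = d then mdiag d * pd c f q else 0)"
| "pd_commutator Sc b f q = pd b f q"

lemma pd_apZ:
  assumes s: "smooth f"
  shows "pd b (apZ Z f) = (\<lambda>q. apZ Z (pd b f) q + pd_commutator Z b f q)"
proof (cases Z)
  case (Dz c)
  then show ?thesis using smooth_pd_pd_commute[OF s] by (simp add: apZ_Dz_eq)
next
  case (Om c d)
  have df: "pd d f differentiable_on UNIV" "pd c f differentiable_on UNIV"
    using s by (simp_all add: smooth_imp_differentiable_on smooth_pd)
  have "pd b (apZ Z f) = pd b (\<lambda>p. (mdiag c * p $ c) * pd d f p - (mdiag d * p $ d) * pd c f p)"
    using Om by (simp add: apZ_Om_eq)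
  also have "\<dots> = (\<lambda>q. (mdiag c * (if b = c then 1 else 0) * pd d f q + (mdiag c * q $ c) * pd b (pd d f) q)
       - (mdiag d * (if b = d then 1 else 0) * pd c f q + (mdiag d * q $ d) * pd b (pd c f) q))"
    using df by (simp add: pd_diff pd_mult pd_const pd_coord)
  also have "\<dots> = (\<lambda>q. apZ Z (pd b f) q + pd_commutator Z b f q)"
    using Om by (auto simp: smooth_pd_pd_commute[OF s] xlow_def algebra_simps)
  finally show ?thesis .
next
  case Sc
  have df: "\<And>a. pd a f differentiable_on UNIV" using s by (simp add: smooth_imp_differentiable_on smooth_pd)
  have "pd b (apZ Z f) = pd b (\<lambda>p. \<Sum>a\<in>UNIV. p $ a * pd a f p)" using Sc by (simp only: apZ_Sc_eq)
  also have "\<dots> = (\<lambda>q. \<Sum>a\<in>UNIV. (if b = a then 1 else 0) * pd a f q + q $ a * pd b (pd a f) q)"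
    using df by (simp add: pd_sum pd_mult pd_coord)
  also have "\<dots> = (\<lambda>q. pd b f q + (\<Sum>a\<in>UNIV. q $ a * pd a (pd b f) q))"
    by (simp add: sum.distrib smooth_pd_pd_commute[OF s] of_bool_def[symmetric] cong: if_cong)
  finally show ?thesis using Sc by (simp add: add.commute)
qed

lemma smooth_pd_commutator:
  assumes "smooth f"
  shows "smooth (pd_commutator Z b f)"
proof -
  have "pd_commutator Z b f = (\<lambda>q. pd b (apZ Z f) q - apZ Z (pd b f) q)"
    using pd_apZ[OF assms, of b Z] by (simp add: fun_eq_iff)
  then show ?thesis by (simp add: smooth_diff smooth_pd smooth_apZ assms)
qed

section \<open>Commuting a vector field with a second-order operator\<close>

definition second_order_op :: "(4 \<Rightarrow> 4 \<Rightarrow> pt \<Rightarrow> real) \<Rightarrow> (pt \<Rightarrow> real) \<Rightarrow> pt \<Rightarrow> real" where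
  "second_order_op P \<psi> q = (\<Sum>a\<in>UNIV. \<Sum>b\<in>UNIV. P a b q * pd a (pd b \<psi>) q)"

text \<open>\<open>tensor_action Z P\<close> is \<open>-(\<partial>\<^sub>e Z\<^sup>a) P\<^sup>e\<^sup>b - (\<partial>\<^sub>e Z\<^sup>b) P\<^sup>a\<^sup>e\<close>, the zeroth-order part of the Lie
  derivative of \<open>P\<close>; for \<open>S\<close> it equals \<open>-2 P\<close>, which cancels against \<open>c\<^sub>S = 2\<close> and is
  therefore set to \<open>0\<close>. So \<open>mod_lie_deriv\<close> is the modified Lie derivative
  \<open>\<L>\<^sub>Z P + c\<^sub>Z P\<close>.\<close>

fun tensor_action :: "zf \<Rightarrow> (4 \<Rightarrow> 4 \<Rightarrow> pt \<Rightarrow> real) \<Rightarrow> 4 \<Rightarrow> 4 \<Rightarrow> pt \<Rightarrow> real" where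
  "tensor_action (Dz c) P a b q = 0"
| "tensor_action Sc P a b q = 0"
| "tensor_action (Om c d) P a b q =
     mdiag d * ((if a = c then P d b q else 0) + (if b = c then P a d q else 0))
   - mdiag c * ((if a = d then P c b q else 0) + (if b = d then P a c q else 0))"

definition mod_lie_deriv :: "zf \<Rightarrow> (4 \<Rightarrow> 4 \<Rightarrow> pt \<Rightarrow> real) \<Rightarrow> 4 \<Rightarrow> 4 \<Rightarrow> pt \<Rightarrow> real" where
  "mod_lie_deriv Z P a b = (\<lambda>q. apZ Z (P a b) q + tensor_action Z P a b q)"

lemma mult_if_zero_right: "(x::real) * (if P then y else 0) = (if P then x * y else 0)"
  by simp

lemma mult_if_zero_left: "(if P then y else 0) * (x::real) = (if P then y * x else 0)"
  by simp

lemma sum_if_zero: "(\<Sum>b\<in>A. if P then X b else (0::real)) = (if P then \<Sum>b\<in>A. X b else 0)"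
  by simp

lemma second_order_op_eq:
  "second_order_op P \<psi> = (\<lambda>q. \<Sum>a\<in>UNIV. \<Sum>b\<in>UNIV. P a b q * pd a (pd b \<psi>) q)"
  by (auto simp: second_order_op_def)

lemma second_order_op_cong:
  "(\<And>a b. P1 a b q = P2 a b q) \<Longrightarrow> second_order_op P1 \<psi> q = second_order_op P2 \<psi> q"
  by (simp add: second_order_op_def)

lemma second_order_op_add:
  "second_order_op (\<lambda>a b q. P1 a b q + P2 a b q) \<psi> q = second_order_op P1 \<psi> q + second_order_op P2 \<psi> q"
  by (simp add: second_order_op_def distrib_right sum.distrib)

lemma smooth_second_order_op:
  "smooth \<psi> \<Longrightarrow> (\<And>a b. smooth (P a b)) \<Longrightarrow> smooth (second_order_op P \<psi>)"
  unfolding second_order_op_eq by (intro smooth_sum smooth_mult smooth_pd) auto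

lemma pd_pd_commutator_Om:
  assumes "smooth f"
  shows "pd a (pd_commutator (Om c d) b f) q =
    (if b = c then mdiag c * pd a (pd d f) q else 0) - (if b = d then mdiag d * pd a (pd c f) q else 0)"
proof -
  have "pd d f differentiable_on UNIV" "pd c f differentiable_on UNIV"
    using assms by (simp_all add: smooth_imp_differentiable_on smooth_pd)
  moreover have "pd_commutator (Om c d) b f =
      (\<lambda>q. (if b = c then mdiag c * pd d f q else 0) - (if b = d then mdiag d * pd c f q else 0))"
    by auto
  ultimately show ?thesis
    by (cases "b = c"; cases "b = d") (simp_all add: pd_diff pd_minus pd_cmult pd_const)
qed

lemma apZ_pd_pd:
  assumes s: "smooth \<psi>"
  shows "apZ Z (pd a (pd b \<psi>)) q
    = pd a (pd b (apZ Z \<psi>)) q - pd a (pd_commutator Z b \<psi>) q - pd_commutator Z a (pd b \<psi>) q"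
proof -
  have "pd a (pd b (apZ Z \<psi>)) = (\<lambda>q. pd a (apZ Z (pd b \<psi>)) q + pd a (pd_commutator Z b \<psi>) q)"
    using s by (simp add: pd_apZ pd_add smooth_imp_differentiable_on smooth_apZ smooth_pd
        smooth_pd_commutator)
  moreover have "pd a (apZ Z (pd b \<psi>)) = (\<lambda>q. apZ Z (pd a (pd b \<psi>)) q + pd_commutator Z a (pd b \<psi>) q)"
    using s by (simp add: pd_apZ smooth_pd)
  ultimately show ?thesis by (simp add: fun_eq_iff)
qed

lemma pd_commutator_contraction:
  assumes s: "smooth \<psi>"
  shows "(\<Sum>a\<in>UNIV. \<Sum>b\<in>UNIV. P a b q * (pd a (pd_commutator Z b \<psi>) q + pd_commutator Z a (pd b \<psi>) q))
     = cZ Z * second_order_op P \<psi> q - second_order_op (tensor_action Z P) \<psi> q"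
proof (cases Z)
  case (Dz c)
  then have "pd_commutator Z b \<psi> = (\<lambda>q. 0)" for b by auto
  with Dz show ?thesis by (simp add: second_order_op_def cZ_def pd_const)
next
  case Sc
  then have "pd_commutator Z b \<psi> = pd b \<psi>" for b by auto
  with Sc show ?thesis
    by (simp add: second_order_op_def cZ_def sum_distrib_left algebra_simps sum.distrib)
next
  case (Om c d)
  then show ?thesis
    by (simp add: second_order_op_def cZ_def pd_pd_commutator_Om[OF s] right_diff_distrib distrib_left
        distrib_right left_diff_distrib sum.distrib sum_subtractf mult_if_zero_right mult_if_zero_left
        sum_if_zero sum.delta sum.delta' sum_distrib_left mult_ac)
qed

lemma hatZ_second_order_op:
  assumes s: "smooth \<psi>" and sP: "\<And>a b. smooth (P a b)"
  shows "hatZ Z (second_order_op P \<psi>) q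
    = second_order_op P (apZ Z \<psi>) q + second_order_op (mod_lie_deriv Z P) \<psi> q"
proof -
  define g where "g a b = pd a (pd b \<psi>)" for a b
  have dPg: "(\<lambda>q. P a b q * g a b q) differentiable_on UNIV" for a b
    using s sP by (simp add: g_def smooth_imp_differentiable_on smooth_mult smooth_pd)
  have "apZ Z (second_order_op P \<psi>) = (\<lambda>q. \<Sum>a\<in>UNIV. \<Sum>b\<in>UNIV. apZ Z (\<lambda>q. P a b q * g a b q) q)"
    unfolding second_order_op_eq g_def[symmetric]
    using dPg by (simp add: apZ_sum differentiable_on_sum)
  also have "\<dots> = (\<lambda>q. \<Sum>a\<in>UNIV. \<Sum>b\<in>UNIV. apZ Z (P a b) q * g a b q + P a b q * apZ Z (g a b) q)"
    using s sP by (simp add: g_def apZ_mult smooth_imp_differentiable_on smooth_pd)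
  finally have "hatZ Z (second_order_op P \<psi>) q
      = (\<Sum>a\<in>UNIV. \<Sum>b\<in>UNIV. apZ Z (P a b) q * g a b q)
      + (\<Sum>a\<in>UNIV. \<Sum>b\<in>UNIV. P a b q * pd a (pd b (apZ Z \<psi>)) q)
      - (\<Sum>a\<in>UNIV. \<Sum>b\<in>UNIV. P a b q * (pd a (pd_commutator Z b \<psi>) q + pd_commutator Z a (pd b \<psi>) q))
      + cZ Z * second_order_op P \<psi> q"
    by (simp add: hatZ_def g_def apZ_pd_pd[OF s] algebra_simps sum.distrib sum_subtractf)
  also have "\<dots> = second_order_op P (apZ Z \<psi>) q + second_order_op (mod_lie_deriv Z P) \<psi> q"
    unfolding pd_commutator_contraction[OF s]
    by (simp add: second_order_op_def mod_lie_deriv_def g_def distrib_right sum.distrib)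
  finally show ?thesis .
qed

section \<open>Expansion of the commutator\<close>

lemma tensor_action_Om_eq:
  "tensor_action (Om c d) P a b = (\<lambda>q.
     mdiag d * (of_bool (a = c) * P d b q + of_bool (b = c) * P a d q)
   - mdiag c * (of_bool (a = d) * P c b q + of_bool (b = d) * P a c q))"
  by auto

lemma tensor_action_Dz_eq: "tensor_action (Dz c) P a b = (\<lambda>q. 0)"
  by auto

lemma tensor_action_Sc_eq: "tensor_action Sc P a b = (\<lambda>q. 0)"
  by auto

lemma smooth_tensor_action:
  assumes "\<And>a b. smooth (P a b)"
  shows "smooth (tensor_action Z P a b)"
proof (cases Z)
  case (Om c d)
  show ?thesis
    unfolding Om tensor_action_Om_eq by (intro smooth_diff smooth_add smooth_cmult assms)
qed (simp_all add: tensor_action_Dz_eq tensor_action_Sc_eq)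

lemma smooth_foldr_tensor_action:
  "(\<And>a b. smooth (P a b)) \<Longrightarrow> smooth (foldr tensor_action As P a b)"
  by (induction As arbitrary: a b) (auto intro: smooth_tensor_action)

lemma apZ_tensor_action:
  assumes "\<And>a b. smooth (Q a b)"
  shows "apZ Z' (tensor_action Z Q a b) = tensor_action Z (\<lambda>a b. apZ Z' (Q a b)) a b"
proof (cases Z)
  case (Om c d)
  have "Q a b differentiable_on UNIV" for a b
    using assms smooth_imp_differentiable_on by blast
  then show ?thesis
    unfolding Om tensor_action_Om_eq by (simp add: apZ_diff apZ_add apZ_cmult)
qed (simp_all add: tensor_action_Dz_eq tensor_action_Sc_eq apZ_const)

lemma apZ_foldr_tensor_action:
  assumes "\<And>a b. smooth (Q a b)"
  shows "apZ Z (foldr tensor_action As Q a b) = foldr tensor_action As (\<lambda>a b. apZ Z (Q a b)) a b"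
proof (induction As arbitrary: a b)
  case (Cons Z' As)
  have "apZ Z (foldr tensor_action (Z' # As) Q a b)
      = tensor_action Z' (\<lambda>a b. apZ Z (foldr tensor_action As Q a b)) a b"
    using apZ_tensor_action smooth_foldr_tensor_action[OF assms] by simp
  with Cons show ?case by simp
qed simp

lemma ZH_Nil: "ZH [] H = H"
  by (intro ext) (simp add: ZH_def ZI_def)

lemma ZH_Cons: "(\<lambda>a b. apZ Z (ZH J H a b)) = ZH (Z # J) H"
  by (simp add: ZH_def ZI_def fun_eq_iff)

lemma smooth_ZH: "(\<And>a b. smooth (H a b)) \<Longrightarrow> smooth (ZH J H a b)"
  by (simp add: ZH_def smooth_ZI)

text \<open>In the term indexed by \<open>(As, J, K)\<close> the fields of \<open>K\<close> have hit \<open>\<phi>\<close>, those of \<open>J\<close> have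
  differentiated \<open>H\<close>, and those of \<open>As\<close> have acted on \<open>H\<close> algebraically.\<close>

definition expansion_term ::
    "(4 \<Rightarrow> 4 \<Rightarrow> pt \<Rightarrow> real) \<Rightarrow> (pt \<Rightarrow> real) \<Rightarrow> zf list \<times> zf list \<times> zf list \<Rightarrow> pt \<Rightarrow> real" where
  "expansion_term H \<phi> t = (case t of (As, J, K) \<Rightarrow>
     second_order_op (foldr tensor_action As (ZH J H)) (ZI K \<phi>))"

fun splittings :: "zf list \<Rightarrow> (zf list \<times> zf list \<times> zf list) list" where
  "splittings [] = [([], [], [])]"
| "splittings (Z # I) =
     concat (map (\<lambda>(As, J, K). [(As, J, Z # K), (As, Z # J, K), (Z # As, J, K)]) (splittings I))"

lemma smooth_expansion_term:
  "(\<And>a b. smooth (H a b)) \<Longrightarrow> smooth \<phi> \<Longrightarrow> smooth (expansion_term H \<phi> t)"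
  unfolding expansion_term_def
  by (cases t) (auto intro!: smooth_second_order_op smooth_ZI smooth_foldr_tensor_action smooth_ZH)

lemma hatZ_expansion_term:
  assumes sH: "\<And>a b. smooth (H a b)" and s: "smooth \<phi>"
  shows "hatZ Z (expansion_term H \<phi> (As, J, K)) q
    = expansion_term H \<phi> (As, J, Z # K) q + expansion_term H \<phi> (As, Z # J, K) q
      + expansion_term H \<phi> (Z # As, J, K) q"
proof -
  have sQ: "\<And>a b. smooth (ZH J H a b)" using sH smooth_ZH by blast
  have "second_order_op (mod_lie_deriv Z (foldr tensor_action As (ZH J H))) (ZI K \<phi>) q
      = second_order_op (\<lambda>a b q. foldr tensor_action As (ZH (Z # J) H) a b q
          + foldr tensor_action (Z # As) (ZH J H) a b q) (ZI K \<phi>) q"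
    by (rule second_order_op_cong) (simp add: mod_lie_deriv_def apZ_foldr_tensor_action[OF sQ] ZH_Cons)
  then show ?thesis
    by (simp add: expansion_term_def hatZ_second_order_op smooth_ZI s smooth_foldr_tensor_action sQ
        second_order_op_add ZI_Cons)
qed

lemma differentiable_on_sum_list:
  "(\<And>t. t \<in> set ts \<Longrightarrow> F t differentiable_on S) \<Longrightarrow> (\<lambda>q. \<Sum>t\<leftarrow>ts. F t q) differentiable_on S"
  by (induction ts) auto

lemma hatZ_sum_list:
  assumes "\<And>t. t \<in> set ts \<Longrightarrow> F t differentiable_on UNIV"
  shows "hatZ Z (\<lambda>q. \<Sum>t\<leftarrow>ts. F t q) = (\<lambda>q. \<Sum>t\<leftarrow>ts. hatZ Z (F t) q)"
  using assms
proof (induction ts)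
  case Nil
  then show ?case by (simp add: hatZ_eq apZ_const)
next
  case (Cons t ts)
  then show ?case by (simp add: hatZ_add differentiable_on_sum_list)
qed

lemma sum_list_map_concat:
  "sum_list (map g (concat (map h ts))) = sum_list (map (\<lambda>t. sum_list (map g (h t))) ts)"
  by (induction ts) auto

lemma hatZI_second_order_op_expansion:
  assumes sH: "\<And>a b. smooth (H a b)" and s: "smooth \<phi>"
  shows "hatZI I (second_order_op H \<phi>) = (\<lambda>q. \<Sum>t\<leftarrow>splittings I. expansion_term H \<phi> t q)"
proof (induction I)
  case Nil
  then show ?case by (simp add: hatZI_def expansion_term_def ZH_Nil ZI_def)
next
  case (Cons Z I)
  have "hatZI (Z # I) (second_order_op H \<phi>) = hatZ Z (\<lambda>q. \<Sum>t\<leftarrow>splittings I. expansion_term H \<phi> t q)"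
    using Cons by (simp add: hatZI_def)
  also have "\<dots> = (\<lambda>q. \<Sum>t\<leftarrow>splittings I. hatZ Z (expansion_term H \<phi> t) q)"
    by (rule hatZ_sum_list) (simp add: smooth_imp_differentiable_on smooth_expansion_term sH s)
  also have "\<dots> = (\<lambda>q. \<Sum>t\<leftarrow>splittings (Z # I). expansion_term H \<phi> t q)"
    by (auto simp: sum_list_map_concat hatZ_expansion_term[OF sH s]
        intro!: ext arg_cong[where f=sum_list])
  finally show ?case .
qed

lemma splittings_eq_Cons:
  "\<exists>rest. splittings I = ([], [], I) # rest \<and> (\<forall>(As, J, K) \<in> set rest. As \<noteq> [] \<or> J \<noteq> [])"
proof (induction I)
  case (Cons Z I)
  then obtain rest where "splittings I = ([], [], I) # rest"
    and "\<forall>(As, J, K) \<in> set rest. As \<noteq> [] \<or> J \<noteq> []"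
    by blast
  then show ?case by (auto simp: split: prod.splits)
qed simp

lemma splittings_lengths:
  assumes "(As, J, K) \<in> set (splittings I)"
  shows "length As + length J + length K = length I \<and> set As \<subseteq> set I \<and> set J \<subseteq> set I \<and> set K \<subseteq> set I"
  using assms
proof (induction I arbitrary: As J K)
  case (Cons Z I)
  then obtain As' J' K' where "(As', J', K') \<in> set (splittings I)"
    and "(As, J, K) \<in> {(As', J', Z # K'), (As', Z # J', K'), (Z # As', J', K')}"
    by (auto split: prod.splits)
  with Cons.IH show ?case by fastforce
qed simp

definition minkowski :: "4 \<Rightarrow> 4 \<Rightarrow> pt \<Rightarrow> real" where
  "minkowski a b q = (if a = b then mdiag a else 0)"

lemma boxt_eq: "boxt H f = (\<lambda>q. second_order_op minkowski f q + second_order_op H f q)"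
  by (intro ext)
    (simp add: boxt_def box_def second_order_op_def minkowski_def mult_if_zero_left sum.delta)

lemma smooth_minkowski: "smooth (minkowski a b)"
  by (cases "a = b") (simp_all add: minkowski_def[abs_def])

lemma mod_lie_deriv_minkowski: "mod_lie_deriv Z minkowski a b q = 0"
proof -
  have "minkowski a b = (\<lambda>q. minkowski a b 0)"
    by (simp add: minkowski_def fun_eq_iff)
  then have "apZ Z (minkowski a b) q = 0"
    by (metis apZ_const)
  moreover have "tensor_action Z minkowski a b q = 0"
    by (cases Z) (auto simp: minkowski_def mdiag_def)
  ultimately show ?thesis by (simp add: mod_lie_deriv_def)
qed

lemma hatZI_box: "smooth \<psi> \<Longrightarrow> hatZI I (second_order_op minkowski \<psi>) = second_order_op minkowski (ZI I \<psi>)"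
proof (induction I)
  case (Cons Z I)
  have "hatZI (Z # I) (second_order_op minkowski \<psi>) = hatZ Z (second_order_op minkowski (ZI I \<psi>))"
    using Cons by (simp add: hatZI_def)
  also have "\<dots> = second_order_op minkowski (ZI (Z # I) \<psi>)"
    by (intro ext) (simp add: hatZ_second_order_op smooth_ZI Cons.prems smooth_minkowski
        second_order_op_def mod_lie_deriv_minkowski ZI_Cons)
  finally show ?case .
qed (simp add: hatZI_def ZI_def)

lemma boxt_commutator_eq:
  assumes sH: "\<And>a b. smooth (H a b)" and s: "smooth \<phi>"
    and rest: "splittings I = ([], [], I) # rest"
  shows "boxt H (ZI I \<phi>) q - hatZI I (boxt H \<phi>) q = - (\<Sum>t\<leftarrow>rest. expansion_term H \<phi> t q)"
proof -
  have "hatZI I (boxt H \<phi>) q = hatZI I (second_order_op minkowski \<phi>) q + hatZI I (second_order_op H \<phi>) q"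
    unfolding boxt_eq
    by (subst hatZI_add) (auto intro: smooth_second_order_op s sH smooth_minkowski)
  also have "\<dots> = second_order_op minkowski (ZI I \<phi>) q + second_order_op H (ZI I \<phi>) q
      + (\<Sum>t\<leftarrow>rest. expansion_term H \<phi> t q)"
    by (simp add: hatZI_box s hatZI_second_order_op_expansion[OF sH s] rest expansion_term_def ZH_Nil)
  finally show ?thesis by (simp add: boxt_eq)
qed

section \<open>Decay of derivatives controlled by the vector fields\<close>

lemma abs_mult_le_mult: "\<bar>a\<bar> \<le> c \<Longrightarrow> \<bar>b\<bar> \<le> M \<Longrightarrow> \<bar>a * b\<bar> \<le> c * (M::real)"
  by (simp add: abs_mult mult_mono)

lemma abs_mult_le_of_abs_le_one: "\<bar>a\<bar> \<le> 1 \<Longrightarrow> \<bar>b\<bar> \<le> M \<Longrightarrow> \<bar>a * b\<bar> \<le> (M::real)"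
  using abs_mult_le_mult[of a 1 b M] by simp

text \<open>At the point \<open>(t, r \<omega>)\<close> with \<open>|\<omega>| = 1\<close>, the numbers \<open>u\<^sub>\<alpha>\<close> are the partial derivatives of
  a function \<open>g\<close>, and \<open>M\<close> bounds them as well as \<open>S g\<close>, the boosts \<open>\<Omega>\<^sub>0\<^sub>i g\<close> and the
  rotations \<open>\<Omega>\<^sub>i\<^sub>j g\<close>.\<close>

locale field_bounds =
  fixes t r w1 w2 w3 u0 u1 u2 u3 M :: real
  assumes t_nonneg: "t \<ge> 0" and r_nonneg: "r \<ge> 0" and unit: "w1\<^sup>2 + w2\<^sup>2 + w3\<^sup>2 = 1"
    and u_bounds: "\<bar>u0\<bar> \<le> M" "\<bar>u1\<bar> \<le> M" "\<bar>u2\<bar> \<le> M" "\<bar>u3\<bar> \<le> M"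
    and scaling_bound: "\<bar>t*u0 + r*w1*u1 + r*w2*u2 + r*w3*u3\<bar> \<le> M"
    and boost_bounds: "\<bar>-t*u1 - r*w1*u0\<bar> \<le> M" "\<bar>-t*u2 - r*w2*u0\<bar> \<le> M" "\<bar>-t*u3 - r*w3*u0\<bar> \<le> M"
    and rotation_bounds:
      "\<bar>r*w1*u2 - r*w2*u1\<bar> \<le> M" "\<bar>r*w1*u3 - r*w3*u1\<bar> \<le> M" "\<bar>r*w2*u3 - r*w3*u2\<bar> \<le> M"
begin

lemma w_bounds: "\<bar>w1\<bar> \<le> 1" "\<bar>w2\<bar> \<le> 1" "\<bar>w3\<bar> \<le> 1"
proof -
  have "w1\<^sup>2 \<le> 1" "w2\<^sup>2 \<le> 1" "w3\<^sup>2 \<le> 1"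
    using unit zero_le_power2[of w1] zero_le_power2[of w2] zero_le_power2[of w3] by linarith+
  then show "\<bar>w1\<bar> \<le> 1" "\<bar>w2\<bar> \<le> 1" "\<bar>w3\<bar> \<le> 1" by (simp_all add: abs_square_le_1)
qed

lemma abs_diff_le_sum: "\<bar>r - t\<bar> * \<bar>X\<bar> \<le> (t + r) * \<bar>X\<bar>"
  using t_nonneg r_nonneg by (intro mult_right_mono) auto

lemma weight_bound:
  assumes "\<bar>X\<bar> \<le> A" "(t + r) * \<bar>X\<bar> \<le> B"
  shows "(1 + t + \<bar>r - t\<bar>) * \<bar>X\<bar> \<le> A + 2 * B"
proof -
  have "(1 + t + \<bar>r - t\<bar>) * \<bar>X\<bar> \<le> (1 + 2 * (t + r)) * \<bar>X\<bar>"
    using t_nonneg r_nonneg by (intro mult_right_mono) auto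
  then show ?thesis using assms by (simp add: algebra_simps)
qed

text \<open>The classical identities \<open>(t + r) \<partial>\<^sub>L = S + \<omega>\<^sup>i \<Omega>\<^sub>0\<^sub>i\<close>, \<open>(t - r) \<partial>\<^sub>Lbar = S - \<omega>\<^sup>i \<Omega>\<^sub>0\<^sub>i\<close>
  and, for \<open>s \<perp> \<omega>\<close>, \<open>(t + r) \<partial>\<^sub>s = -s\<^sup>i \<Omega>\<^sub>0\<^sub>i + \<Sigma>\<^sub>i\<^sub><\<^sub>j (s\<^sub>j \<omega>\<^sub>i - s\<^sub>i \<omega>\<^sub>j) \<Omega>\<^sub>i\<^sub>j / r\<close>.\<close>

lemma L_identity:
  "(t + r) * (u0 + w1*u1 + w2*u2 + w3*u3) = (t*u0 + r*w1*u1 + r*w2*u2 + r*w3*u3)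
     - (w1 * (-t*u1 - r*w1*u0) + w2 * (-t*u2 - r*w2*u0) + w3 * (-t*u3 - r*w3*u0))"
  using unit by algebra

lemma Lbar_identity:
  "(t - r) * (u0 - (w1*u1 + w2*u2 + w3*u3)) = (t*u0 + r*w1*u1 + r*w2*u2 + r*w3*u3)
     + (w1 * (-t*u1 - r*w1*u0) + w2 * (-t*u2 - r*w2*u0) + w3 * (-t*u3 - r*w3*u0))"
  using unit by algebra

lemma tangential_identity:
  assumes "s1*w1 + s2*w2 + s3*w3 = 0"
  shows "(t + r) * (s1*u1 + s2*u2 + s3*u3) =
     - (s1 * (-t*u1 - r*w1*u0) + s2 * (-t*u2 - r*w2*u0) + s3 * (-t*u3 - r*w3*u0))
     + (s2*w1 - s1*w2) * (r*w1*u2 - r*w2*u1) + (s3*w1 - s1*w3) * (r*w1*u3 - r*w3*u1)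
     + (s3*w2 - s2*w3) * (r*w2*u3 - r*w3*u2)"
  using unit assms by algebra

lemma L_comp_bounds:
  "\<bar>u0 + w1*u1 + w2*u2 + w3*u3\<bar> \<le> 4 * M"
  "(t + r) * \<bar>u0 + w1*u1 + w2*u2 + w3*u3\<bar> \<le> 4 * M"
proof -
  note wu = abs_mult_le_of_abs_le_one[OF w_bounds(1)] abs_mult_le_of_abs_le_one[OF w_bounds(2)]
    abs_mult_le_of_abs_le_one[OF w_bounds(3)]
  show "\<bar>u0 + w1*u1 + w2*u2 + w3*u3\<bar> \<le> 4 * M"
    using wu(1)[OF u_bounds(2)] wu(2)[OF u_bounds(3)] wu(3)[OF u_bounds(4)] u_bounds(1) by linarith
  have "(t + r) * \<bar>u0 + w1*u1 + w2*u2 + w3*u3\<bar> = \<bar>(t + r) * (u0 + w1*u1 + w2*u2 + w3*u3)\<bar>"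
    using t_nonneg r_nonneg by (simp add: abs_mult)
  also have "\<dots> \<le> 4 * M" unfolding L_identity
    using wu(1)[OF boost_bounds(1)] wu(2)[OF boost_bounds(2)] wu(3)[OF boost_bounds(3)] scaling_bound
    by linarith
  finally show "(t + r) * \<bar>u0 + w1*u1 + w2*u2 + w3*u3\<bar> \<le> 4 * M" .
qed

lemma Lbar_comp_bound: "\<bar>r - t\<bar> * \<bar>u0 - (w1*u1 + w2*u2 + w3*u3)\<bar> \<le> 4 * M"
proof -
  note wu = abs_mult_le_of_abs_le_one[OF w_bounds(1)] abs_mult_le_of_abs_le_one[OF w_bounds(2)]
    abs_mult_le_of_abs_le_one[OF w_bounds(3)]
  have "\<bar>r - t\<bar> * \<bar>u0 - (w1*u1 + w2*u2 + w3*u3)\<bar> = \<bar>(t - r) * (u0 - (w1*u1 + w2*u2 + w3*u3))\<bar>"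
    by (simp add: abs_mult abs_minus_commute)
  also have "\<dots> \<le> 4 * M" unfolding Lbar_identity
    using wu(1)[OF boost_bounds(1)] wu(2)[OF boost_bounds(2)] wu(3)[OF boost_bounds(3)] scaling_bound
    by linarith
  finally show ?thesis .
qed

lemma tangential_comp_bounds:
  assumes s: "\<bar>s1\<bar> \<le> 1" "\<bar>s2\<bar> \<le> 1" "\<bar>s3\<bar> \<le> 1" and perp: "s1*w1 + s2*w2 + s3*w3 = 0"
  shows "\<bar>s1*u1 + s2*u2 + s3*u3\<bar> \<le> 3 * M" and "(t + r) * \<bar>s1*u1 + s2*u2 + s3*u3\<bar> \<le> 9 * M"
proof -
  note su = abs_mult_le_of_abs_le_one[OF s(1)] abs_mult_le_of_abs_le_one[OF s(2)]
    abs_mult_le_of_abs_le_one[OF s(3)]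
  show "\<bar>s1*u1 + s2*u2 + s3*u3\<bar> \<le> 3 * M"
    using su(1)[OF u_bounds(2)] su(2)[OF u_bounds(3)] su(3)[OF u_bounds(4)] by linarith
  have "\<bar>s2*w1 - s1*w2\<bar> \<le> 2" "\<bar>s3*w1 - s1*w3\<bar> \<le> 2" "\<bar>s3*w2 - s2*w3\<bar> \<le> 2"
    using su(1)[OF w_bounds(2)] su(1)[OF w_bounds(3)] su(2)[OF w_bounds(1)] su(2)[OF w_bounds(3)]
      su(3)[OF w_bounds(1)] su(3)[OF w_bounds(2)] by linarith+
  note c = abs_mult_le_mult[OF this(1) rotation_bounds(1)] abs_mult_le_mult[OF this(2) rotation_bounds(2)]
    abs_mult_le_mult[OF this(3) rotation_bounds(3)]
  have "(t + r) * \<bar>s1*u1 + s2*u2 + s3*u3\<bar> = \<bar>(t + r) * (s1*u1 + s2*u2 + s3*u3)\<bar>"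
    using t_nonneg r_nonneg by (simp add: abs_mult)
  also have "\<dots> \<le> 9 * M" unfolding tangential_identity[OF perp]
    using su(1)[OF boost_bounds(1)] su(2)[OF boost_bounds(2)] su(3)[OF boost_bounds(3)] c by linarith
  finally show "(t + r) * \<bar>s1*u1 + s2*u2 + s3*u3\<bar> \<le> 9 * M" .
qed

lemma L_derivative_bound: "(1 + t + \<bar>r - t\<bar>) * \<bar>u0 + w1*u1 + w2*u2 + w3*u3\<bar> \<le> 12 * M"
  using weight_bound[OF L_comp_bounds] by linarith

lemma tangential_derivative_bound:
  assumes "\<bar>s1\<bar> \<le> 1" "\<bar>s2\<bar> \<le> 1" "\<bar>s3\<bar> \<le> 1" "s1*w1 + s2*w2 + s3*w3 = 0"
  shows "(1 + t + \<bar>r - t\<bar>) * \<bar>s1*u1 + s2*u2 + s3*u3\<bar> \<le> 21 * M"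
  using weight_bound[OF tangential_comp_bounds[OF assms]] by linarith

text \<open>Both \<open>u\<^sub>0\<close> and \<open>\<omega>\<cdot>u\<close> are half-sums of the \<open>L\<close>- and \<open>Lbar\<close>-components.\<close>

lemma half_sum_weighted_bound:
  assumes "\<bar>r - t\<bar> * \<bar>X\<bar> \<le> 4 * M" "\<bar>r - t\<bar> * \<bar>V\<bar> \<le> 4 * M" "Y = (X + V) / 2 \<or> Y = (X - V) / 2"
  shows "\<bar>r - t\<bar> * \<bar>Y\<bar> \<le> 4 * M"
proof -
  have "\<bar>Y\<bar> \<le> (\<bar>X\<bar> + \<bar>V\<bar>) / 2" using assms(3) by auto
  then have "\<bar>r - t\<bar> * \<bar>Y\<bar> \<le> \<bar>r - t\<bar> * ((\<bar>X\<bar> + \<bar>V\<bar>) / 2)" by (intro mult_left_mono) auto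
  then show ?thesis using assms(1,2) by (simp add: algebra_simps)
qed

lemma radial_comp_bound: "\<bar>r - t\<bar> * \<bar>w1*u1 + w2*u2 + w3*u3\<bar> \<le> 4 * M"
  by (rule half_sum_weighted_bound[OF order_trans[OF abs_diff_le_sum L_comp_bounds(2)] Lbar_comp_bound])
    (rule disjI2, simp add: field_simps)

lemma time_derivative_bound: "(1 + \<bar>r - t\<bar>) * \<bar>u0\<bar> \<le> 40 * M"
proof -
  have "\<bar>r - t\<bar> * \<bar>u0\<bar> \<le> 4 * M"
    by (rule half_sum_weighted_bound[OF order_trans[OF abs_diff_le_sum L_comp_bounds(2)] Lbar_comp_bound])
      (rule disjI1, simp add: field_simps)
  then show ?thesis using u_bounds(1) by (simp add: distrib_right)
qed

lemma spatial_derivative_bound: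
  assumes s: "\<bar>s1\<bar> \<le> 1" "\<bar>s2\<bar> \<le> 1" "\<bar>s3\<bar> \<le> 1" and perp: "s1*w1 + s2*w2 + s3*w3 = 0"
    and wi: "\<bar>wi\<bar> \<le> 1" and ui: "\<bar>ui\<bar> \<le> M"
    and split: "ui = wi * (w1*u1 + w2*u2 + w3*u3) + (s1*u1 + s2*u2 + s3*u3)"
  shows "(1 + \<bar>r - t\<bar>) * \<bar>ui\<bar> \<le> 40 * M"
proof -
  have "\<bar>ui\<bar> \<le> \<bar>wi\<bar> * \<bar>w1*u1 + w2*u2 + w3*u3\<bar> + \<bar>s1*u1 + s2*u2 + s3*u3\<bar>"
    unfolding split by (metis abs_mult abs_triangle_ineq)
  then have "\<bar>r - t\<bar> * \<bar>ui\<bar>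
      \<le> \<bar>r - t\<bar> * (\<bar>wi\<bar> * \<bar>w1*u1 + w2*u2 + w3*u3\<bar> + \<bar>s1*u1 + s2*u2 + s3*u3\<bar>)"
    by (rule mult_left_mono) simp
  also have "\<dots>
      = \<bar>wi\<bar> * (\<bar>r - t\<bar> * \<bar>w1*u1 + w2*u2 + w3*u3\<bar>) + \<bar>r - t\<bar> * \<bar>s1*u1 + s2*u2 + s3*u3\<bar>"
    by (simp add: algebra_simps)
  also have "\<dots> \<le> 1 * (4 * M) + 9 * M"
    using mult_mono[OF wi radial_comp_bound] tangential_comp_bounds(2)[OF s perp]
      abs_diff_le_sum[of "s1*u1 + s2*u2 + s3*u3"] by simp
  finally show ?thesis using ui by (simp add: distrib_right)
qed

end

section \<open>The null frame\<close>

lemma spatial_index_cases: "i \<noteq> (0::4) \<Longrightarrow> i = 1 \<or> i = 2 \<or> i = 3"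
  using exhaust_4[of i] by auto

lemma sum_spatial: "(\<Sum>i\<in>UNIV - {0::4}. f i) = f 1 + f 2 + f 3"
proof -
  have "UNIV - {0::4} = {1, 2, 3}" using spatial_index_cases by auto
  then show ?thesis by (simp add: add.assoc)
qed

lemma rad_eq: "rad p = sqrt ((p$1)\<^sup>2 + (p$2)\<^sup>2 + (p$3)\<^sup>2)"
  by (simp add: rad_def sum_spatial)

lemma rad_nonneg: "rad p \<ge> 0"
  by (simp add: rad_eq)

lemma omega_sum_squares: "(omega p 1)\<^sup>2 + (omega p 2)\<^sup>2 + (omega p 3)\<^sup>2 = 1"
proof (cases "rad p = 0")
  case False
  have "(omega p 1)\<^sup>2 + (omega p 2)\<^sup>2 + (omega p 3)\<^sup>2 = ((p$1)\<^sup>2 + (p$2)\<^sup>2 + (p$3)\<^sup>2) / (rad p)\<^sup>2"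
    using False by (simp add: omega_def power_divide add_divide_distrib)
  also have "(p$1)\<^sup>2 + (p$2)\<^sup>2 + (p$3)\<^sup>2 = (rad p)\<^sup>2" by (simp add: rad_eq)
  finally show ?thesis using False by simp
qed (simp add: omega_def)

lemma coord_eq_rad_omega: "i \<noteq> 0 \<Longrightarrow> p $ i = rad p * omega p i"
proof (cases "rad p = 0")
  case True
  assume i: "i \<noteq> 0"
  have "(p$1)\<^sup>2 + (p$2)\<^sup>2 + (p$3)\<^sup>2 = 0" using True by (simp add: rad_eq)
  then have "p$1 = 0" "p$2 = 0" "p$3 = 0" by (simp_all add: add_nonneg_eq_0_iff)
  then show ?thesis using spatial_index_cases[OF i] True by auto
qed (simp add: omega_def)

lemma abs_omega_le_one: "i \<noteq> 0 \<Longrightarrow> \<bar>omega p i\<bar> \<le> 1"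
  using field_bounds.w_bounds[of 0 0 "omega p 1" "omega p 2" "omega p 3" 0 0 0 0 0]
    spatial_index_cases omega_sum_squares by (force simp: field_bounds_def)

lemma Lvec_nth: "Lvec p $ c = (if c = 0 then 1 else omega p c)"
  by (simp add: Lvec_def)

text \<open>The coordinate fields split as \<open>\<partial>\<^sub>a = \<lambda>\<^sub>a L + \<kappa>\<^sub>a Lbar + \<tau>\<^sub>a\<^sup>c \<partial>\<^sub>c\<close>, where \<open>Lbar = \<partial>\<^sub>t - \<partial>\<^sub>r\<close>
  and \<open>\<tau>\<close> is the orthogonal projection onto the tangent spaces of the spheres.\<close>

definition Lbar_comp :: "pt \<Rightarrow> 4 \<Rightarrow> real" where
  "Lbar_comp p c = (if c = 0 then 1 else - omega p c)"

definition L_coeff :: "pt \<Rightarrow> 4 \<Rightarrow> real" where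
  "L_coeff p a = (if a = 0 then 1/2 else omega p a / 2)"

definition Lbar_coeff :: "pt \<Rightarrow> 4 \<Rightarrow> real" where
  "Lbar_coeff p a = (if a = 0 then 1/2 else - omega p a / 2)"

definition tangential_proj :: "pt \<Rightarrow> 4 \<Rightarrow> 4 \<Rightarrow> real" where
  "tangential_proj p a c =
     (if a = 0 \<or> c = 0 then 0 else (if a = c then 1 else 0) - omega p a * omega p c)"

lemma null_frame_decomposition:
  "L_coeff p a * Lvec p $ c + Lbar_coeff p a * Lbar_comp p c + tangential_proj p a c
     = (if a = c then 1 else 0)"
  by (auto simp: L_coeff_def Lbar_coeff_def tangential_proj_def Lbar_comp_def Lvec_nth algebra_simps)

lemma Lbar_coeff_eq: "Lbar_coeff p a = - (mdiag a * Lvec p $ a) / 2"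
  by (simp add: Lbar_coeff_def mdiag_def Lvec_nth)

lemma null_frame_comp_bounds:
  "\<bar>Lvec p $ c\<bar> \<le> 1" "\<bar>Lbar_comp p c\<bar> \<le> 1" "\<bar>L_coeff p a\<bar> \<le> 1" "\<bar>Lbar_coeff p a\<bar> \<le> 1"
  using abs_omega_le_one[of c p] abs_omega_le_one[of a p]
  by (auto simp: Lvec_nth Lbar_comp_def L_coeff_def Lbar_coeff_def)

lemma abs_tangential_proj_le_one: "\<bar>tangential_proj p a c\<bar> \<le> 1"
proof (cases "a = 0 \<or> c = 0")
  case False
  have "\<bar>omega p a * omega p c\<bar> \<le> 1" "omega p a * omega p a \<le> 1"
    using abs_mult_le_of_abs_le_one abs_omega_le_one False
    by (metis abs_le_D1 abs_mult_self_eq)+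
  moreover have "0 \<le> omega p a * omega p a" by simp
  ultimately show ?thesis using False by (auto simp: tangential_proj_def abs_le_iff)
qed (simp add: tangential_proj_def)

lemma tangential_proj_orthogonal:
  "tangential_proj p a 1 * omega p 1 + tangential_proj p a 2 * omega p 2 + tangential_proj p a 3 * omega p 3
   = 0"
proof (cases "a = 0")
  case False
  then have "tangential_proj p a 1 * omega p 1 + tangential_proj p a 2 * omega p 2
      + tangential_proj p a 3 * omega p 3
      = omega p a - omega p a * ((omega p 1)\<^sup>2 + (omega p 2)\<^sup>2 + (omega p 3)\<^sup>2)"
    using spatial_index_cases[OF False]
    by (auto simp: tangential_proj_def algebra_simps power2_eq_square)
  then show ?thesis by (simp add: omega_sum_squares)
qed (simp add: tangential_proj_def)

lemma omega_tangential_split: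
  "i \<noteq> 0 \<Longrightarrow> x i = omega p i * (omega p 1 * x 1 + omega p 2 * x 2 + omega p 3 * x 3)
     + (tangential_proj p i 1 * x 1 + tangential_proj p i 2 * x 2 + tangential_proj p i 3 * x 3)"
  using spatial_index_cases by (auto simp: tangential_proj_def algebra_simps)

section \<open>Second derivatives in the null frame\<close>

lemma finite_Zset: "finite Zset"
proof -
  have "{Om a b | a b. a < b} \<subseteq> (\<lambda>(a, b). Om a b) ` UNIV" by auto
  then show ?thesis unfolding Zset_def by (simp add: finite_subset)
qed

lemma Dz_in_Zset: "Dz a \<in> Zset" and Sc_in_Zset: "Sc \<in> Zset" and Om_in_Zset: "a < b \<Longrightarrow> Om a b \<in> Zset"
  unfolding Zset_def by auto

definition Znorm :: "(pt \<Rightarrow> real) \<Rightarrow> pt \<Rightarrow> real" where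
  "Znorm g p = (\<Sum>Z\<in>Zset. \<bar>apZ Z g p\<bar>)"

lemma Znorm_nonneg: "0 \<le> Znorm g p"
  unfolding Znorm_def by (simp add: sum_nonneg)

lemma abs_apZ_le_Znorm: "Z \<in> Zset \<Longrightarrow> \<bar>apZ Z g p\<bar> \<le> Znorm g p"
  unfolding Znorm_def by (rule member_le_sum) (auto simp: finite_Zset)

lemma abs_apZ_Om_le_Znorm: "\<bar>apZ (Om a b) g p\<bar> \<le> Znorm g p"
proof -
  consider "a < b" | "a = b" | "b < a" by fastforce
  then show ?thesis
  proof cases
    case 3
    have "apZ (Om a b) g p = - apZ (Om b a) g p" by simp
    then show ?thesis using abs_apZ_le_Znorm[OF Om_in_Zset[OF 3], of g p] by (simp only: abs_minus_cancel)
  qed (rule abs_apZ_le_Znorm[OF Om_in_Zset], simp_all add: Znorm_nonneg)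
qed

lemma field_bounds_at:
  assumes "tcoord p \<ge> 0"
  shows "field_bounds (p$0) (rad p) (omega p 1) (omega p 2) (omega p 3)
    (pd 0 g p) (pd 1 g p) (pd 2 g p) (pd 3 g p) (Znorm g p)"
proof
  have x: "p$i = rad p * omega p i" if "i \<noteq> 0" for i using coord_eq_rad_omega[OF that] .
  have boost: "\<bar>- p$0 * pd i g p - rad p * omega p i * pd 0 g p\<bar> \<le> Znorm g p" if "i \<noteq> 0" for i
    using abs_apZ_Om_le_Znorm[of 0 i g p] that by (simp add: xlow_def mdiag_def x)
  have rotation: "\<bar>rad p * omega p i * pd j g p - rad p * omega p j * pd i g p\<bar> \<le> Znorm g p"
    if "i \<noteq> 0" "j \<noteq> 0" for i j
    using abs_apZ_Om_le_Znorm[of i j g p] that by (simp add: xlow_def mdiag_def x mult.assoc)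
  have pd_bound: "\<bar>pd a g p\<bar> \<le> Znorm g p" for a
    using abs_apZ_le_Znorm[OF Dz_in_Zset, of a g p] by simp
  show "\<bar>pd 0 g p\<bar> \<le> Znorm g p" "\<bar>pd 1 g p\<bar> \<le> Znorm g p"
    "\<bar>pd 2 g p\<bar> \<le> Znorm g p" "\<bar>pd 3 g p\<bar> \<le> Znorm g p"
    by (rule pd_bound)+
  show "\<bar>p$0 * pd 0 g p + rad p * omega p 1 * pd 1 g p + rad p * omega p 2 * pd 2 g p
      + rad p * omega p 3 * pd 3 g p\<bar> \<le> Znorm g p"
    using abs_apZ_le_Znorm[OF Sc_in_Zset, of g p] by (simp add: sum_UNIV_4 x mult.assoc)
  show "\<bar>- p$0 * pd 1 g p - rad p * omega p 1 * pd 0 g p\<bar> \<le> Znorm g p"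
    "\<bar>- p$0 * pd 2 g p - rad p * omega p 2 * pd 0 g p\<bar> \<le> Znorm g p"
    "\<bar>- p$0 * pd 3 g p - rad p * omega p 3 * pd 0 g p\<bar> \<le> Znorm g p"
    using boost[of 1] boost[of 2] boost[of 3] by simp_all
  show "\<bar>rad p * omega p 1 * pd 2 g p - rad p * omega p 2 * pd 1 g p\<bar> \<le> Znorm g p"
    "\<bar>rad p * omega p 1 * pd 3 g p - rad p * omega p 3 * pd 1 g p\<bar> \<le> Znorm g p"
    "\<bar>rad p * omega p 2 * pd 3 g p - rad p * omega p 3 * pd 2 g p\<bar> \<le> Znorm g p"
    using rotation[of 1 2] rotation[of 1 3] rotation[of 2 3] by simp_all
qed (use assms rad_nonneg omega_sum_squares in \<open>simp_all add: tcoord_def\<close>)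

lemma weight_eqs:
  "1 + tcoord p + \<bar>qcoord p\<bar> = 1 + p$0 + \<bar>rad p - p$0\<bar>" "1 + \<bar>qcoord p\<bar> = 1 + \<bar>rad p - p$0\<bar>"
  by (simp_all add: qcoord_def tcoord_def)

lemma abs_le_divide: "1 \<le> W \<Longrightarrow> W * \<bar>x\<bar> \<le> K \<Longrightarrow> \<bar>x\<bar> \<le> K / (W::real)"
  by (simp add: pos_le_divide_eq mult.commute)

lemma L_derivative_decay:
  assumes "tcoord p \<ge> 0"
  shows "\<bar>\<Sum>c\<in>UNIV. Lvec p $ c * pd c g p\<bar> \<le> 12 * Znorm g p / (1 + tcoord p + \<bar>qcoord p\<bar>)"
proof (rule abs_le_divide)
  have "(1 + p$0 + \<bar>rad p - p$0\<bar>) * \<bar>\<Sum>c\<in>UNIV. Lvec p $ c * pd c g p\<bar> \<le> 12 * Znorm g p"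
    using field_bounds.L_derivative_bound[OF field_bounds_at[OF assms]]
    by (simp add: sum_UNIV_4 Lvec_nth add.assoc)
  then show "(1 + tcoord p + \<bar>qcoord p\<bar>) * \<bar>\<Sum>c\<in>UNIV. Lvec p $ c * pd c g p\<bar> \<le> 12 * Znorm g p"
    unfolding weight_eqs .
qed (use assms in simp)

lemma tangential_derivative_decay:
  assumes "tcoord p \<ge> 0"
  shows "\<bar>\<Sum>c\<in>UNIV. tangential_proj p a c * pd c g p\<bar> \<le> 21 * Znorm g p / (1 + tcoord p + \<bar>qcoord p\<bar>)"
proof (rule abs_le_divide)
  have "(1 + p$0 + \<bar>rad p - p$0\<bar>) * \<bar>\<Sum>c\<in>UNIV. tangential_proj p a c * pd c g p\<bar> \<le> 21 * Znorm g p"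
  proof -
    have "(\<Sum>c\<in>UNIV. tangential_proj p a c * pd c g p)
        = tangential_proj p a 1 * pd 1 g p + tangential_proj p a 2 * pd 2 g p
          + tangential_proj p a 3 * pd 3 g p"
      by (simp add: sum_UNIV_4 tangential_proj_def)
    then show ?thesis
      using field_bounds.tangential_derivative_bound[OF field_bounds_at[OF assms]
          abs_tangential_proj_le_one abs_tangential_proj_le_one abs_tangential_proj_le_one
          tangential_proj_orthogonal] by simp
  qed
  then show "(1 + tcoord p + \<bar>qcoord p\<bar>) * \<bar>\<Sum>c\<in>UNIV. tangential_proj p a c * pd c g p\<bar> \<le> 21 * Znorm g p"
    unfolding weight_eqs .
qed (use assms in simp)

lemma pd_decay:
  assumes "tcoord p \<ge> 0"
  shows "\<bar>pd c g p\<bar> \<le> 40 * Znorm g p / (1 + \<bar>qcoord p\<bar>)"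
proof (rule abs_le_divide)
  interpret field_bounds "p$0" "rad p" "omega p 1" "omega p 2" "omega p 3"
      "pd 0 g p" "pd 1 g p" "pd 2 g p" "pd 3 g p" "Znorm g p"
    by (rule field_bounds_at[OF assms])
  show "(1 + \<bar>qcoord p\<bar>) * \<bar>pd c g p\<bar> \<le> 40 * Znorm g p"
  proof (cases "c = 0")
    case False
    show ?thesis unfolding weight_eqs
      by (rule spatial_derivative_bound[OF abs_tangential_proj_le_one abs_tangential_proj_le_one
          abs_tangential_proj_le_one tangential_proj_orthogonal abs_omega_le_one[OF False]
          abs_apZ_le_Znorm[OF Dz_in_Zset, simplified] omega_tangential_split[OF False]])
  qed (use time_derivative_bound in \<open>simp add: weight_eqs\<close>)
qed simp

lemma abs_sum_le_sum_bounds: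
  "(\<And>c. c \<in> A \<Longrightarrow> \<bar>f c\<bar> \<le> B c) \<Longrightarrow> \<bar>\<Sum>c\<in>A. f c\<bar> \<le> (\<Sum>c\<in>A. B c :: real)"
  by (rule order_trans[OF sum_abs sum_mono])

lemma symmetric_null_decomposition:
  fixes A :: "4 \<Rightarrow> 4 \<Rightarrow> real" and p :: pt
  assumes sym: "\<And>a b. A a b = A b a"
  defines "LA \<equiv> \<lambda>b. \<Sum>c\<in>UNIV. Lvec p $ c * A c b"
    and "UA \<equiv> \<lambda>b. \<Sum>c\<in>UNIV. Lbar_comp p c * A c b"
    and "TA \<equiv> \<lambda>a b. \<Sum>c\<in>UNIV. tangential_proj p a c * A c b"
  shows "A a b = L_coeff p a * LA b + TA a b
      + Lbar_coeff p a * (L_coeff p b * (\<Sum>c\<in>UNIV. Lbar_comp p c * LA c) + (\<Sum>c\<in>UNIV. Lbar_comp p c * TA b c))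
      + Lbar_coeff p a * Lbar_coeff p b * (\<Sum>c\<in>UNIV. Lbar_comp p c * UA c)"
proof -
  have split: "A a b = L_coeff p a * LA b + Lbar_coeff p a * UA b + TA a b" for a b
  proof -
    have "A a b = (\<Sum>c\<in>UNIV. (L_coeff p a * Lvec p $ c + Lbar_coeff p a * Lbar_comp p c
        + tangential_proj p a c) * A c b)"
      unfolding null_frame_decomposition by (simp add: mult_if_zero_left sum.delta)
    then show ?thesis
      unfolding LA_def UA_def TA_def by (simp add: distrib_right sum.distrib sum_distrib_left mult.assoc)
  qed
  have "UA b = (\<Sum>c\<in>UNIV. Lbar_comp p c * A b c)" unfolding UA_def using sym by simp
  also have "\<dots> = L_coeff p b * (\<Sum>c\<in>UNIV. Lbar_comp p c * LA c)
      + Lbar_coeff p b * (\<Sum>c\<in>UNIV. Lbar_comp p c * UA c) + (\<Sum>c\<in>UNIV. Lbar_comp p c * TA b c)"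
    unfolding split[of b] by (simp add: distrib_left sum.distrib sum_distrib_left mult.left_commute)
  finally show ?thesis using split[of a b] by (simp add: algebra_simps)
qed

lemma abs_sum_Lbar_comp_le:
  "(\<And>c. \<bar>x c\<bar> \<le> k * m c / W) \<Longrightarrow> \<bar>\<Sum>c\<in>UNIV. Lbar_comp p c * x c\<bar> \<le> k * (\<Sum>c\<in>UNIV. m c) / W"
  using abs_sum_le_sum_bounds[of UNIV "\<lambda>c. Lbar_comp p c * x c" "\<lambda>c. k * m c / W"]
    abs_mult_le_of_abs_le_one[OF null_frame_comp_bounds(2)]
  by (simp add: sum_divide_distrib[symmetric] sum_distrib_left)

text \<open>All components of a symmetric matrix in the null frame except the \<open>Lbar Lbar\<close> one
  involve an \<open>L\<close> or a tangential direction and so inherit the better bound.\<close>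

lemma symmetric_null_split:
  fixes A :: "4 \<Rightarrow> 4 \<Rightarrow> real" and m :: "4 \<Rightarrow> real" and W1 W2 :: real and p :: pt
  assumes sym: "\<And>a b. A a b = A b a" and W1: "1 \<le> W1" and m: "\<And>c. 0 \<le> m c"
    and L: "\<And>b. \<bar>\<Sum>c\<in>UNIV. Lvec p $ c * A c b\<bar> \<le> 12 * m b / W1"
    and T: "\<And>a b. \<bar>\<Sum>c\<in>UNIV. tangential_proj p a c * A c b\<bar> \<le> 21 * m b / W1"
    and all: "\<And>c d. \<bar>A d c\<bar> \<le> 40 * m c / W2"
  obtains B u where "\<And>a b. A a b = B a b + Lbar_coeff p a * Lbar_coeff p b * u"
    and "\<And>a b. \<bar>B a b\<bar> \<le> 66 * (\<Sum>c\<in>UNIV. m c) / W1" and "\<bar>u\<bar> \<le> 160 * (\<Sum>c\<in>UNIV. m c) / W2"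
proof -
  define SM where "SM = (\<Sum>c\<in>UNIV. m c)"
  define LA where "LA b = (\<Sum>c\<in>UNIV. Lvec p $ c * A c b)" for b
  define UA where "UA b = (\<Sum>c\<in>UNIV. Lbar_comp p c * A c b)" for b
  define TA where "TA a b = (\<Sum>c\<in>UNIV. tangential_proj p a c * A c b)" for a b
  have "m c \<le> SM" for c unfolding SM_def by (rule member_le_sum) (auto simp: m)
  then have mSM: "k * m c / W1 \<le> k * SM / W1" if "0 \<le> k" for k c
    using W1 that by (simp add: divide_right_mono mult_left_mono)
  have LUA: "\<bar>\<Sum>c\<in>UNIV. Lbar_comp p c * LA c\<bar> \<le> 12 * SM / W1"
    unfolding SM_def LA_def by (intro abs_sum_Lbar_comp_le L)
  have TUA: "\<bar>\<Sum>c\<in>UNIV. Lbar_comp p c * TA b c\<bar> \<le> 21 * SM / W1" for b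
    unfolding SM_def TA_def by (intro abs_sum_Lbar_comp_le T)
  have "\<bar>UA c\<bar> \<le> 160 * m c / W2" for c
    using abs_sum_Lbar_comp_le[of "\<lambda>d. A d c" 40 "\<lambda>_. m c" W2 p] all by (simp add: UA_def)
  then have UUA: "\<bar>\<Sum>c\<in>UNIV. Lbar_comp p c * UA c\<bar> \<le> 160 * SM / W2"
    unfolding SM_def by (rule abs_sum_Lbar_comp_le)
  define B where "B a b = L_coeff p a * LA b + TA a b
    + Lbar_coeff p a * (L_coeff p b * (\<Sum>c\<in>UNIV. Lbar_comp p c * LA c) + (\<Sum>c\<in>UNIV. Lbar_comp p c * TA b c))"
    for a b
  have "A a b = B a b + Lbar_coeff p a * Lbar_coeff p b * (\<Sum>c\<in>UNIV. Lbar_comp p c * UA c)" for a b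
    unfolding B_def LA_def UA_def TA_def by (rule symmetric_null_decomposition[OF sym])
  moreover have "\<bar>B a b\<bar> \<le> 66 * SM / W1" for a b
  proof -
    have "\<bar>LA b\<bar> \<le> 12 * SM / W1" using L[of b] mSM[of 12 b] unfolding LA_def by simp
    then have "\<bar>L_coeff p a * LA b\<bar> \<le> 12 * SM / W1"
      by (rule abs_mult_le_of_abs_le_one[OF null_frame_comp_bounds(3)])
    moreover have "\<bar>TA a b\<bar> \<le> 21 * SM / W1" using T[of a b] mSM[of 21 b] unfolding TA_def by simp
    moreover have "\<bar>L_coeff p b * (\<Sum>c\<in>UNIV. Lbar_comp p c * LA c)\<bar> \<le> 12 * SM / W1"
      by (rule abs_mult_le_of_abs_le_one[OF null_frame_comp_bounds(3) LUA])
    then have "\<bar>Lbar_coeff p a * (L_coeff p b * (\<Sum>c\<in>UNIV. Lbar_comp p c * LA c)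
        + (\<Sum>c\<in>UNIV. Lbar_comp p c * TA b c))\<bar> \<le> 12 * SM / W1 + 21 * SM / W1"
      using TUA[of b] by (intro abs_mult_le_of_abs_le_one[OF null_frame_comp_bounds(4)]) linarith
    ultimately have "\<bar>B a b\<bar> \<le> 12 * SM / W1 + 21 * SM / W1 + (12 * SM / W1 + 21 * SM / W1)"
      unfolding B_def by linarith
    then show ?thesis by (simp add: add_divide_distrib[symmetric])
  qed
  ultimately show thesis using UUA unfolding SM_def by (rule that)
qed

lemma tnorm_nonneg: "0 \<le> tnorm P p"
  unfolding tnorm_def by (simp add: sum_nonneg)

lemma second_order_op_bound:
  assumes s: "smooth \<psi>" and t0: "tcoord p \<ge> 0"
  shows "\<bar>second_order_op Q \<psi> p\<bar>
    \<le> (66 * tnorm Q p / (1 + tcoord p + \<bar>qcoord p\<bar>) + 40 * normLL Q p / (1 + \<bar>qcoord p\<bar>))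
      * (\<Sum>c\<in>UNIV. Znorm (pd c \<psi>) p)"
proof -
  have sym: "pd a (pd b \<psi>) p = pd b (pd a \<psi>) p" for a b
    using smooth_pd_pd_commute[OF s] by metis
  have W1: "1 \<le> 1 + tcoord p + \<bar>qcoord p\<bar>" using t0 by simp
  obtain B u where dec: "\<And>a b. pd a (pd b \<psi>) p = B a b + Lbar_coeff p a * Lbar_coeff p b * u"
    and B: "\<And>a b. \<bar>B a b\<bar> \<le> 66 * (\<Sum>c\<in>UNIV. Znorm (pd c \<psi>) p) / (1 + tcoord p + \<bar>qcoord p\<bar>)"
    and u: "\<bar>u\<bar> \<le> 160 * (\<Sum>c\<in>UNIV. Znorm (pd c \<psi>) p) / (1 + \<bar>qcoord p\<bar>)"
    by (rule symmetric_null_split[where A = "\<lambda>a b. pd a (pd b \<psi>) p" and m = "\<lambda>c. Znorm (pd c \<psi>) p",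
          OF sym W1 Znorm_nonneg L_derivative_decay[OF t0] tangential_derivative_decay[OF t0] pd_decay[OF t0]]) blast
  define W1 where "W1 = 1 + tcoord p + \<bar>qcoord p\<bar>"
  define W2 where "W2 = 1 + \<bar>qcoord p\<bar>"
  define SM where "SM = (\<Sum>c\<in>UNIV. Znorm (pd c \<psi>) p)"
  note B = B[folded W1_def SM_def] and u = u[folded W2_def SM_def]
  have "(\<Sum>a\<in>UNIV. \<Sum>b\<in>UNIV. Q a b p * (Lbar_coeff p a * Lbar_coeff p b)) = contr Q p (Lvec p) (Lvec p) / 4"
    unfolding contr_def Lbar_coeff_eq by (simp add: sum_divide_distrib algebra_simps)
  moreover have "second_order_op Q \<psi> p = (\<Sum>a\<in>UNIV. \<Sum>b\<in>UNIV. Q a b p * B a b)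
      + u * (\<Sum>a\<in>UNIV. \<Sum>b\<in>UNIV. Q a b p * (Lbar_coeff p a * Lbar_coeff p b))"
    by (simp add: second_order_op_def dec distrib_left sum.distrib sum_distrib_left mult_ac)
  ultimately have "second_order_op Q \<psi> p
      = (\<Sum>a\<in>UNIV. \<Sum>b\<in>UNIV. Q a b p * B a b) + u * (contr Q p (Lvec p) (Lvec p) / 4)"
    by simp
  moreover have "\<bar>\<Sum>a\<in>UNIV. \<Sum>b\<in>UNIV. Q a b p * B a b\<bar> \<le> tnorm Q p * (66 * SM / W1)"
  proof -
    have "\<bar>\<Sum>a\<in>UNIV. \<Sum>b\<in>UNIV. Q a b p * B a b\<bar> \<le> (\<Sum>a\<in>UNIV. \<Sum>b\<in>UNIV. \<bar>Q a b p\<bar> * (66 * SM / W1))"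
      by (intro abs_sum_le_sum_bounds) (metis abs_ge_zero abs_mult B mult_left_mono)
    then show ?thesis by (simp only: tnorm_def sum_distrib_right)
  qed
  moreover have "\<bar>u * (contr Q p (Lvec p) (Lvec p) / 4)\<bar> \<le> (160 * SM / W2) * (normLL Q p / 4)"
    unfolding normLL_def abs_mult using u by (intro mult_mono) auto
  ultimately have "\<bar>second_order_op Q \<psi> p\<bar> \<le> tnorm Q p * (66 * SM / W1) + (160 * SM / W2) * (normLL Q p / 4)"
    by (smt (verit))
  then show ?thesis unfolding W1_def W2_def SM_def by (simp add: algebra_simps)
qed

lemma pd_le_gradnorm: "\<bar>pd c f p\<bar> \<le> gradnorm f p"
  unfolding gradnorm_def by (rule member_le_sum) auto

lemma gradnorm_nonneg: "0 \<le> gradnorm f p"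
  unfolding gradnorm_def by (simp add: sum_nonneg)

lemma abs_pd_commutator_le: "\<bar>pd_commutator Z c \<psi> p\<bar> \<le> 2 * gradnorm \<psi> p"
proof (cases Z)
  case (Om a b)
  then have "\<bar>pd_commutator Z c \<psi> p\<bar> \<le> \<bar>pd b \<psi> p\<bar> + \<bar>pd a \<psi> p\<bar>"
    by (auto simp: mdiag_def abs_mult)
  then show ?thesis using pd_le_gradnorm[of b \<psi> p] pd_le_gradnorm[of a \<psi> p] by linarith
qed (use pd_le_gradnorm[of c \<psi> p] gradnorm_nonneg[of \<psi> p] in auto)

definition Zgradnorm :: "(pt \<Rightarrow> real) \<Rightarrow> pt \<Rightarrow> real" where
  "Zgradnorm \<psi> p = gradnorm \<psi> p + (\<Sum>Z\<in>Zset. gradnorm (apZ Z \<psi>) p)"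

lemma sum_Znorm_pd_le:
  assumes s: "smooth \<psi>"
  shows "(\<Sum>c\<in>UNIV. Znorm (pd c \<psi>) p) \<le> (1 + 8 * real (card Zset)) * Zgradnorm \<psi> p"
proof -
  have "\<bar>apZ Z (pd c \<psi>) p\<bar> \<le> \<bar>pd c (apZ Z \<psi>) p\<bar> + 2 * gradnorm \<psi> p" for Z c
    using pd_apZ[OF s, of c Z] abs_pd_commutator_le[of Z c \<psi> p] by (simp add: fun_eq_iff)
  then have "(\<Sum>c\<in>UNIV. Znorm (pd c \<psi>) p)
      \<le> (\<Sum>c\<in>UNIV. \<Sum>Z\<in>Zset. \<bar>pd c (apZ Z \<psi>) p\<bar> + 2 * gradnorm \<psi> p)"
    unfolding Znorm_def by (intro sum_mono)
  also have "\<dots> = (\<Sum>Z\<in>Zset. gradnorm (apZ Z \<psi>) p) + 8 * real (card Zset) * gradnorm \<psi> p"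
    by (simp add: sum.distrib sum.swap[of _ UNIV Zset] gradnorm_def)
  also have "\<dots> \<le> (1 + 8 * real (card Zset)) * Zgradnorm \<psi> p"
    using gradnorm_nonneg[of \<psi> p] sum_nonneg[of Zset "\<lambda>Z. gradnorm (apZ Z \<psi>) p"] gradnorm_nonneg
    by (simp add: Zgradnorm_def algebra_simps)
  finally show ?thesis .
qed

section \<open>The algebraic action on the null components of a tensor\<close>

lemma inner_pt_eq: "inner (x::pt) y = x$0 * y$0 + x$1 * y$1 + x$2 * y$2 + x$3 * y$3"
  by (simp add: inner_vec_def sum_UNIV_4)

lemma sframe_spans_tangent:
  assumes fr: "sframe S1 S2" and s0: "s $ 0 = 0" and sL: "inner s (Lvec p) = 0"
  shows "s = inner s (S1 p) *\<^sub>R S1 p + inner s (S2 p) *\<^sub>R S2 p"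
proof -
  define e0 :: pt where "e0 = axis 0 1"
  define n where "n = Lvec p - e0"
  define a where "a = S1 p"
  define b where "b = S2 p"
  have fa: "a $ 0 = 0" "norm a = 1" "inner a (Lvec p) = 0" and fb: "b $ 0 = 0" "norm b = 1" "inner b (Lvec p) = 0"
    and ab: "inner a b = 0"
    using fr unfolding sframe_def a_def b_def by auto
  have ie: "inner e0 x = x $ 0" for x unfolding e0_def by (simp add: inner_axis')
  have ie': "inner x e0 = x $ 0" for x using ie by (metis inner_commute)
  have ine: "inner x n = inner x (Lvec p) - x $ 0" for x
    unfolding n_def by (simp add: inner_diff_right inner_commute ie)
  have nn: "inner n n = 1"
    using omega_sum_squares[of p] unfolding n_def e0_def inner_pt_eq
    by (simp add: Lvec_nth axis_def power2_eq_square)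
  have "n $ 0 = 0" unfolding n_def e0_def by (simp add: Lvec_nth axis_def)
  then have "inner e0 n = 0" "inner e0 a = 0" "inner e0 b = 0" "inner a n = 0" "inner b n = 0"
    using ine[of a] ine[of b] fa fb by (simp_all add: ie)
  then have orth: "inner e0 n = 0" "inner e0 a = 0" "inner e0 b = 0" "inner n a = 0" "inner n b = 0"
    by (simp_all add: inner_commute)
  have nz: "e0 \<noteq> 0" "n \<noteq> 0" "a \<noteq> 0" "b \<noteq> 0"
    using nn fa fb by (auto simp: e0_def)
  define B where "B = {e0, n, a, b}"
  have "e0 \<noteq> n" "e0 \<noteq> a" "e0 \<noteq> b" "n \<noteq> a" "n \<noteq> b" "a \<noteq> b"
    using orth ab nz by (metis inner_eq_zero_iff)+
  then have "card B = 4" unfolding B_def by simp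
  moreover have "pairwise orthogonal B"
    unfolding B_def pairwise_def orthogonal_def using orth ab by (auto simp: inner_commute)
  then have "independent B" using pairwise_orthogonal_independent nz unfolding B_def by auto
  ultimately have span: "UNIV \<subseteq> span B"
    by (intro card_ge_dim_independent) simp_all
  define w where "w = s - inner s a *\<^sub>R a - inner s b *\<^sub>R b"
  have aa: "inner a a = 1" "inner b b = 1" using fa fb by (simp_all add: norm_eq_1)
  have "orthogonal w y" if "y \<in> B" for y
  proof -
    have "inner w e0 = 0" unfolding w_def using s0 fa fb by (simp add: inner_diff_left inner_commute ie)
    moreover have "inner w n = 0" unfolding w_def using s0 sL fa fb by (simp add: inner_diff_left ine)
    moreover have "inner w a = 0" "inner w b = 0"
      unfolding w_def using aa ab by (simp_all add: inner_diff_left inner_diff_right inner_commute)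
    ultimately show ?thesis using that unfolding B_def orthogonal_def by auto
  qed
  then have "w = 0" using orthogonal_to_span span orthogonal_self by blast
  then show ?thesis unfolding w_def a_def b_def by (simp add: algebra_simps)
qed

lemma abs_triangle_ineq3: "\<bar>a + b + c\<bar> \<le> \<bar>a\<bar> + \<bar>b\<bar> + \<bar>c :: real\<bar>"
  by simp

lemma contr_add_right: "contr P p X (Y + W) = contr P p X Y + contr P p X W"
  by (simp add: contr_def algebra_simps sum.distrib)

lemma contr_diff_right: "contr P p X (Y - W) = contr P p X Y - contr P p X W"
  by (simp add: contr_def algebra_simps sum_subtractf)

lemma contr_scale_right: "contr P p X (k *\<^sub>R Y) = k * contr P p X Y"
  by (simp add: contr_def algebra_simps sum_distrib_left)

lemma normLT_nonneg: "0 \<le> normLT S1 S2 Q p"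
  unfolding normLT_def by simp

lemma abs_inner_sframe_le:
  assumes fr: "sframe S1 S2" and s: "\<And>b. \<bar>s $ b\<bar> \<le> k"
  shows "\<bar>inner s (S1 p)\<bar> \<le> 4 * k" "\<bar>inner s (S2 p)\<bar> \<le> 4 * k"
proof -
  have "norm s \<le> 4 * k"
    using norm_le_l1_cart[of s] sum_mono[of UNIV "\<lambda>b. \<bar>s $ b\<bar>" "\<lambda>b. k"] s by simp
  moreover have "norm (S1 p) = 1" "norm (S2 p) = 1" using fr unfolding sframe_def by auto
  ultimately show "\<bar>inner s (S1 p)\<bar> \<le> 4 * k" "\<bar>inner s (S2 p)\<bar> \<le> 4 * k"
    using Cauchy_Schwarz_ineq2[of s "S1 p"] Cauchy_Schwarz_ineq2[of s "S2 p"] by auto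
qed

text \<open>A vector that is Minkowski-orthogonal to \<open>L\<close> lies in the span of \<open>L, S\<^sub>1, S\<^sub>2\<close>, so
  contracting it against \<open>L\<close> only sees the \<open>L\<T>\<close> components.\<close>

lemma contr_L_orthogonal_le_normLT:
  assumes fr: "sframe S1 S2" and perp: "(\<Sum>b\<in>UNIV. mdiag b * V $ b * Lvec p $ b) = 0"
    and V: "\<And>b. \<bar>V $ b\<bar> \<le> 2"
  shows "\<bar>contr Q p (Lvec p) V\<bar> \<le> 16 * normLT S1 S2 Q p"
proof -
  define L where "L = Lvec p"
  have L0: "L $ 0 = 1" unfolding L_def by (simp add: Lvec_nth)
  have Lb: "\<bar>L $ b\<bar> \<le> 1" for b unfolding L_def by (rule null_frame_comp_bounds)
  define s where "s = V - (V $ 0) *\<^sub>R L"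
  have "inner V L = 2 * V $ 0"
    using perp L0 unfolding inner_pt_eq L_def by (simp add: sum_UNIV_4 mdiag_def)
  moreover have "inner L L = 2"
    using omega_sum_squares[of p] unfolding inner_pt_eq L_def by (simp add: Lvec_nth power2_eq_square)
  ultimately have "inner s (Lvec p) = 0" unfolding s_def L_def[symmetric] by (simp add: inner_diff_left)
  moreover have "s $ 0 = 0" unfolding s_def using L0 by simp
  ultimately have s_eq: "s = inner s (S1 p) *\<^sub>R S1 p + inner s (S2 p) *\<^sub>R S2 p"
    by (intro sframe_spans_tangent[OF fr])
  have "\<bar>s $ b\<bar> \<le> 4" for b
  proof -
    have "\<bar>s $ b\<bar> \<le> \<bar>V $ b\<bar> + \<bar>V $ 0\<bar> * \<bar>L $ b\<bar>" unfolding s_def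
      using abs_triangle_ineq4[of "V $ b" "V $ 0 * L $ b"] by (simp add: abs_mult)
    also have "\<dots> \<le> 2 + 2 * 1" using V[of b] V[of 0] Lb[of b] by (intro add_mono mult_mono) auto
    finally show ?thesis by simp
  qed
  note coeff = abs_inner_sframe_le[OF fr this]
  have "V = (V $ 0) *\<^sub>R L + (inner s (S1 p) *\<^sub>R S1 p + inner s (S2 p) *\<^sub>R S2 p)"
    using s_eq unfolding s_def by (simp add: algebra_simps)
  then have "contr Q p L V
      = contr Q p L ((V $ 0) *\<^sub>R L + (inner s (S1 p) *\<^sub>R S1 p + inner s (S2 p) *\<^sub>R S2 p))"
    by (rule arg_cong)
  also have "\<dots> = V $ 0 * contr Q p L L + inner s (S1 p) * contr Q p L (S1 p)
      + inner s (S2 p) * contr Q p L (S2 p)"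
    by (simp only: contr_add_right contr_scale_right add.assoc)
  finally have "contr Q p L V = V $ 0 * contr Q p L L + inner s (S1 p) * contr Q p L (S1 p)
      + inner s (S2 p) * contr Q p L (S2 p)" .
  then have "\<bar>contr Q p L V\<bar> \<le> \<bar>V $ 0\<bar> * \<bar>contr Q p L L\<bar> + \<bar>inner s (S1 p)\<bar> * \<bar>contr Q p L (S1 p)\<bar>
      + \<bar>inner s (S2 p)\<bar> * \<bar>contr Q p L (S2 p)\<bar>"
    unfolding abs_mult[symmetric] by (simp only: abs_triangle_ineq3)
  also have "\<dots> \<le> 16 * (\<bar>contr Q p L L\<bar> + \<bar>contr Q p L (S1 p)\<bar> + \<bar>contr Q p L (S2 p)\<bar>)"
    using V[of 0] coeff by (simp add: distrib_left add_mono mult_right_mono)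
  finally show ?thesis unfolding normLT_def L_def .
qed

lemma contr_tensor_action_Om:
  assumes sym: "\<And>a b. Q a b p = Q b a p"
  shows "contr (tensor_action (Om c d) Q) p X X
    = 2 * contr Q p X ((mdiag c * X$c) *\<^sub>R axis d 1 - (mdiag d * X$d) *\<^sub>R axis c 1)"
proof -
  define Y where "Y x = (\<Sum>a\<in>UNIV. mdiag a * Q a x p * X $ a)" for x
  have Y': "(\<Sum>b\<in>UNIV. mdiag b * Q x b p * X $ b) = Y x" for x
    unfolding Y_def using sym by simp
  have "contr (tensor_action (Om c d) Q) p X X = mdiag d * mdiag c * X$c * (\<Sum>b\<in>UNIV. mdiag b * Q d b p * X $ b)
      + mdiag d * mdiag c * X$c * Y d - mdiag c * mdiag d * X$d * (\<Sum>b\<in>UNIV. mdiag b * Q c b p * X $ b)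
      - mdiag c * mdiag d * X$d * Y c"
    unfolding contr_def Y_def
    by (simp add: right_diff_distrib distrib_left distrib_right left_diff_distrib sum.distrib
        sum_subtractf mult_if_zero_right mult_if_zero_left sum_if_zero sum.delta sum.delta'
        sum_distrib_left mult_ac)
  also have "\<dots> = 2 * (mdiag c * mdiag d * (X$c * Y d - X$d * Y c))"
    unfolding Y' by (simp add: algebra_simps)
  also have "mdiag c * mdiag d * (X$c * Y d - X$d * Y c)
      = contr Q p X ((mdiag c * X$c) *\<^sub>R axis d 1 - (mdiag d * X$d) *\<^sub>R axis c 1)"
    unfolding contr_diff_right contr_scale_right
    by (simp add: contr_def Y_def axis_def mult_if_zero_right mult_if_zero_left sum.delta sum.delta'
        sum_distrib_left sum_distrib_right algebra_simps cong: if_cong)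
  finally show ?thesis .
qed

text \<open>\<open>\<Omega>\<^sub>c\<^sub>d\<close> is antisymmetric for the Minkowski product, so \<open>\<Omega>\<^sub>c\<^sub>d L\<close> is Minkowski-orthogonal
  to \<open>L\<close>.\<close>

lemma normLL_tensor_action_le:
  assumes fr: "sframe S1 S2" and sym: "\<And>a b. Q a b p = Q b a p"
  shows "normLL (tensor_action Z Q) p \<le> 32 * normLT S1 S2 Q p"
proof (cases Z)
  case (Om c d)
  define L where "L = Lvec p"
  define V :: pt where "V = (mdiag c * L$c) *\<^sub>R axis d 1 - (mdiag d * L$d) *\<^sub>R axis c 1"
  have Vn: "V $ b = (if b = d then mdiag c * L$c else 0) - (if b = c then mdiag d * L$d else 0)" for b
    unfolding V_def by (simp add: axis_def)
  have "\<bar>mdiag c * L$c\<bar> \<le> 1" "\<bar>mdiag d * L$d\<bar> \<le> 1"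
    unfolding L_def by (simp_all add: abs_mult mdiag_def null_frame_comp_bounds)
  then have V: "\<bar>V $ b\<bar> \<le> 2" for b unfolding Vn by (auto simp: abs_le_iff)
  have "(\<Sum>b\<in>UNIV. mdiag b * V $ b * Lvec p $ b) = 0"
    unfolding Vn L_def
    by (simp add: left_diff_distrib right_diff_distrib mult_if_zero_right mult_if_zero_left
        sum_subtractf sum.delta sum.delta' mult_ac)
  then have "\<bar>contr Q p L V\<bar> \<le> 16 * normLT S1 S2 Q p"
    unfolding L_def using V by (rule contr_L_orthogonal_le_normLT[OF fr])
  then show ?thesis
    unfolding normLL_def Om L_def contr_tensor_action_Om[where Q = Q and p = p, OF sym] using V_def L_def by (simp add: abs_mult)
qed (auto simp: normLL_def contr_def normLT_nonneg)

lemma abs_mdiag [simp]: "\<bar>mdiag a\<bar> = 1"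
  by (simp add: mdiag_def)

lemma row_le_tnorm: "(\<Sum>b\<in>UNIV. \<bar>P d b p\<bar>) \<le> tnorm P p"
  unfolding tnorm_def by (rule member_le_sum[where f = "\<lambda>a. \<Sum>b\<in>UNIV. \<bar>P a b p\<bar>"]) (auto simp: sum_nonneg)

lemma column_le_tnorm: "(\<Sum>a\<in>UNIV. \<bar>P a d p\<bar>) \<le> tnorm P p"
  unfolding tnorm_def by (rule sum_mono, rule member_le_sum) auto

lemma tnorm_tensor_action_le: "tnorm (tensor_action Z P) p \<le> 4 * tnorm P p"
proof (cases Z)
  case (Om c d)
  have "\<bar>tensor_action Z P a b p\<bar> \<le> (if a = c then \<bar>P d b p\<bar> else 0) + (if b = c then \<bar>P a d p\<bar> else 0)
     + (if a = d then \<bar>P c b p\<bar> else 0) + (if b = d then \<bar>P a c p\<bar> else 0)" for a b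
  proof -
    define X where "X = (if a = c then P d b p else 0) + (if b = c then P a d p else 0)"
    define Y where "Y = (if a = d then P c b p else 0) + (if b = d then P a c p else 0)"
    have "\<bar>tensor_action Z P a b p\<bar> = \<bar>mdiag d * X - mdiag c * Y\<bar>" using Om by (simp add: X_def Y_def)
    also have "\<dots> \<le> \<bar>X\<bar> + \<bar>Y\<bar>" using abs_triangle_ineq4[of "mdiag d * X" "mdiag c * Y"] by (simp add: abs_mult)
    also have "\<dots> \<le> ((if a = c then \<bar>P d b p\<bar> else 0) + (if b = c then \<bar>P a d p\<bar> else 0))
        + ((if a = d then \<bar>P c b p\<bar> else 0) + (if b = d then \<bar>P a c p\<bar> else 0))"
      unfolding X_def Y_def by (intro add_mono) (auto intro: order_trans[OF abs_triangle_ineq])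
    finally show ?thesis by simp
  qed
  then have "tnorm (tensor_action Z P) p \<le> (\<Sum>a\<in>UNIV. \<Sum>b\<in>UNIV. (if a = c then \<bar>P d b p\<bar> else 0)
     + (if b = c then \<bar>P a d p\<bar> else 0) + (if a = d then \<bar>P c b p\<bar> else 0) + (if b = d then \<bar>P a c p\<bar> else 0))"
    unfolding tnorm_def by (intro sum_mono)
  also have "\<dots> = (\<Sum>b\<in>UNIV. \<bar>P d b p\<bar>) + (\<Sum>a\<in>UNIV. \<bar>P a d p\<bar>) + (\<Sum>b\<in>UNIV. \<bar>P c b p\<bar>)
      + (\<Sum>a\<in>UNIV. \<bar>P a c p\<bar>)"
    by (simp add: sum.distrib sum_if_zero sum.delta sum.delta')
  also have "\<dots> \<le> 4 * tnorm P p"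
    using row_le_tnorm[of P d p] column_le_tnorm[of P d p] row_le_tnorm[of P c p] column_le_tnorm[of P c p]
    by linarith
  finally show ?thesis .
qed (auto simp: tnorm_def tnorm_nonneg[of P p, unfolded tnorm_def])

lemma tnorm_foldr_tensor_action_le: "tnorm (foldr tensor_action As P) p \<le> 4 ^ length As * tnorm P p"
proof (induction As)
  case (Cons Z As)
  then show ?case using tnorm_tensor_action_le[of Z "foldr tensor_action As P" p] by simp
qed simp

lemma normLL_le_tnorm: "normLL P p \<le> tnorm P p"
  unfolding normLL_def contr_def tnorm_def
proof (intro order_trans[OF sum_abs] sum_mono order_trans[OF sum_abs])
  fix a b
  have "\<bar>Lvec p $ a\<bar> * \<bar>Lvec p $ b\<bar> \<le> 1"
    using null_frame_comp_bounds(1)[of p a] null_frame_comp_bounds(1)[of p b] by (auto intro: mult_le_one)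
  then show "\<bar>mdiag a * mdiag b * P a b p * Lvec p $ a * Lvec p $ b\<bar> \<le> \<bar>P a b p\<bar>"
    by (simp add: abs_mult mult.assoc mult_left_le)
qed

definition rhs_t :: "nat \<Rightarrow> (4 \<Rightarrow> 4 \<Rightarrow> pt \<Rightarrow> real) \<Rightarrow> (pt \<Rightarrow> real) \<Rightarrow> pt \<Rightarrow> real" where
  "rhs_t n H \<phi> p = 1 / (1 + tcoord p + \<bar>qcoord p\<bar>) *
     (\<Sum>K\<in>MI n. \<Sum>J\<in>{J\<in>MI n. length J + (length K - 1) \<le> n}. tnorm (ZH J H) p * gradnorm (ZI K \<phi>) p)"

definition null_weight ::
    "(pt \<Rightarrow> pt) \<Rightarrow> (pt \<Rightarrow> pt) \<Rightarrow> nat \<Rightarrow> (4 \<Rightarrow> 4 \<Rightarrow> pt \<Rightarrow> real) \<Rightarrow> zf list \<Rightarrow> pt \<Rightarrow> real" where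
  "null_weight S1 S2 n H K p =
     (\<Sum>J\<in>{J\<in>MI n. length J + (length K - 1) \<le> n}. normLL (ZH J H) p)
   + (\<Sum>J\<in>{J\<in>MI n. length J + (length K - 1) + 1 \<le> n}. normLT S1 S2 (ZH J H) p)
   + (\<Sum>J\<in>{J\<in>MI n. length J + (length K - 1) + 2 \<le> n}. tnorm (ZH J H) p)"

definition rhs_q ::
    "(pt \<Rightarrow> pt) \<Rightarrow> (pt \<Rightarrow> pt) \<Rightarrow> nat \<Rightarrow> (4 \<Rightarrow> 4 \<Rightarrow> pt \<Rightarrow> real) \<Rightarrow> (pt \<Rightarrow> real) \<Rightarrow> pt \<Rightarrow> real" where
  "rhs_q S1 S2 n H \<phi> p = 1 / (1 + \<bar>qcoord p\<bar>) *
     (\<Sum>K\<in>MI n. null_weight S1 S2 n H K p * gradnorm (ZI K \<phi>) p)"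

lemma finite_MI: "finite (MI n)"
  unfolding MI_def by (rule finite_lists_length_le[OF finite_Zset])

lemma normLL_nonneg: "0 \<le> normLL P p"
  unfolding normLL_def by simp

lemma null_weight_nonneg: "0 \<le> null_weight S1 S2 n H K p"
  unfolding null_weight_def by (intro add_nonneg_nonneg sum_nonneg normLL_nonneg normLT_nonneg tnorm_nonneg)

lemma null_weight_ge:
  assumes "J \<in> MI n"
  shows "length J + (length K - 1) \<le> n \<Longrightarrow> normLL (ZH J H) p \<le> null_weight S1 S2 n H K p"
    and "length J + (length K - 1) + 1 \<le> n \<Longrightarrow> normLT S1 S2 (ZH J H) p \<le> null_weight S1 S2 n H K p"
    and "length J + (length K - 1) + 2 \<le> n \<Longrightarrow> tnorm (ZH J H) p \<le> null_weight S1 S2 n H K p"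
proof -
  let ?A = "\<lambda>k. {J\<in>MI n. length J + (length K - 1) + k \<le> n}"
  have sums: "0 \<le> (\<Sum>J\<in>?A 0. normLL (ZH J H) p)" "0 \<le> (\<Sum>J\<in>?A 1. normLT S1 S2 (ZH J H) p)"
    "0 \<le> (\<Sum>J\<in>?A 2. tnorm (ZH J H) p)"
    by (intro sum_nonneg normLL_nonneg normLT_nonneg tnorm_nonneg)+
  have member: "J \<in> ?A k" if "length J + (length K - 1) + k \<le> n" for k
    using assms that by simp
  show "length J + (length K - 1) \<le> n \<Longrightarrow> normLL (ZH J H) p \<le> null_weight S1 S2 n H K p"
    using member[of 0] sums member_le_sum[of J "?A 0" "\<lambda>J. normLL (ZH J H) p"]
    by (simp add: null_weight_def finite_MI normLL_nonneg)
  show "length J + (length K - 1) + 1 \<le> n \<Longrightarrow> normLT S1 S2 (ZH J H) p \<le> null_weight S1 S2 n H K p"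
    using member[of 1] sums member_le_sum[of J "?A 1" "\<lambda>J. normLT S1 S2 (ZH J H) p"]
    by (simp add: null_weight_def finite_MI normLT_nonneg)
  show "length J + (length K - 1) + 2 \<le> n \<Longrightarrow> tnorm (ZH J H) p \<le> null_weight S1 S2 n H K p"
    using member[of 2] sums member_le_sum[of J "?A 2" "\<lambda>J. tnorm (ZH J H) p"]
    by (simp add: null_weight_def finite_MI tnorm_nonneg)
qed

lemma rhs_t_nonneg: "tcoord p \<ge> 0 \<Longrightarrow> 0 \<le> rhs_t n H \<phi> p"
  unfolding rhs_t_def by (intro mult_nonneg_nonneg sum_nonneg tnorm_nonneg gradnorm_nonneg) auto

lemma term_le_rhs_t:
  assumes t0: "tcoord p \<ge> 0" and J: "J \<in> MI n" and K: "K \<in> MI n" and len: "length J + (length K - 1) \<le> n"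
    and x: "x \<le> c * tnorm (ZH J H) p" and c: "0 \<le> c"
  shows "x * gradnorm (ZI K \<phi>) p / (1 + tcoord p + \<bar>qcoord p\<bar>) \<le> c * rhs_t n H \<phi> p"
proof -
  let ?f = "\<lambda>K. \<Sum>J\<in>{J\<in>MI n. length J + (length K - 1) \<le> n}. tnorm (ZH J H) p * gradnorm (ZI K \<phi>) p"
  have "x * gradnorm (ZI K \<phi>) p \<le> c * (tnorm (ZH J H) p * gradnorm (ZI K \<phi>) p)"
    using mult_right_mono[OF x gradnorm_nonneg] by (simp add: mult.assoc)
  also have "tnorm (ZH J H) p * gradnorm (ZI K \<phi>) p \<le> ?f K"
    using J len finite_MI
    by (intro member_le_sum) (auto intro: mult_nonneg_nonneg tnorm_nonneg gradnorm_nonneg)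
  also have "\<dots> \<le> (\<Sum>K\<in>MI n. ?f K)"
    using K finite_MI
    by (intro member_le_sum[where f = ?f]) (auto intro!: sum_nonneg mult_nonneg_nonneg tnorm_nonneg gradnorm_nonneg)
  finally show ?thesis unfolding rhs_t_def using t0 c by (simp add: divide_right_mono mult_left_mono)
qed

lemma term_le_rhs_q:
  assumes K: "K \<in> MI n" and x: "x \<le> c * null_weight S1 S2 n H K p" and c: "0 \<le> c"
  shows "x * gradnorm (ZI K \<phi>) p / (1 + \<bar>qcoord p\<bar>) \<le> c * rhs_q S1 S2 n H \<phi> p"
proof -
  have "x * gradnorm (ZI K \<phi>) p \<le> c * (null_weight S1 S2 n H K p * gradnorm (ZI K \<phi>) p)"
    using mult_right_mono[OF x gradnorm_nonneg] by (simp add: mult.assoc)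
  also have "null_weight S1 S2 n H K p * gradnorm (ZI K \<phi>) p
      \<le> (\<Sum>K\<in>MI n. null_weight S1 S2 n H K p * gradnorm (ZI K \<phi>) p)"
    using K finite_MI
    by (intro member_le_sum[where f = "\<lambda>K. null_weight S1 S2 n H K p * gradnorm (ZI K \<phi>) p"])
      (auto intro!: mult_nonneg_nonneg null_weight_nonneg gradnorm_nonneg)
  finally show ?thesis unfolding rhs_q_def using c by (simp add: divide_right_mono mult_left_mono)
qed

lemma normLL_foldr_tensor_action_le:
  assumes fr: "sframe S1 S2" and symH: "\<And>a b. H a b = H b a" and J: "J \<in> MI n"
    and len: "length As + length J + (length K - 1) \<le> n"
  shows "normLL (foldr tensor_action As (ZH J H)) p \<le> 32 * 4 ^ n * null_weight S1 S2 n H K p"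
proof -
  let ?w = "null_weight S1 S2 n H K p"
  have scale: "c * ?w \<le> 32 * 4 ^ n * ?w" if "c \<le> 32" for c
  proof (rule mult_right_mono[OF _ null_weight_nonneg])
    show "c \<le> 32 * 4 ^ n" using that one_le_power[of "4::real" n] by linarith
  qed
  show ?thesis
  proof (cases As rule: remdups_adj.cases)
    case 1
    have "normLL (ZH J H) p \<le> ?w" using 1 len by (intro null_weight_ge(1)[OF J]) simp
    then show ?thesis using 1 scale[of 1] by simp
  next
    case (2 Z)
    have "normLL (tensor_action Z (ZH J H)) p \<le> 32 * normLT S1 S2 (ZH J H) p"
      using symH by (intro normLL_tensor_action_le[OF fr]) (simp add: ZH_def)
    also have "\<dots> \<le> 32 * ?w" using 2 len by (simp add: null_weight_ge(2)[OF J])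
    finally show ?thesis using 2 scale[of 32] by simp
  next
    case (3 Z Z' As')
    have "normLL (foldr tensor_action As (ZH J H)) p \<le> 4 ^ length As * tnorm (ZH J H) p"
      using normLL_le_tnorm tnorm_foldr_tensor_action_le order_trans by blast
    also have "\<dots> \<le> 4 ^ n * ?w"
      using 3 len by (intro mult_mono power_increasing tnorm_nonneg null_weight_nonneg null_weight_ge(3)[OF J]) auto
    also have "\<dots> \<le> 32 * 4 ^ n * ?w"
      using null_weight_nonneg[of S1 S2 n H K p] by (simp add: mult_right_mono)
    finally show ?thesis .
  qed
qed

lemma tnorm_foldr_tensor_action_le_pow:
  "length As \<le> n \<Longrightarrow> tnorm (foldr tensor_action As P) p \<le> 4 ^ n * tnorm P p"
  using tnorm_foldr_tensor_action_le[of As P p]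
  by (smt (verit) mult_right_mono one_le_numeral power_increasing tnorm_nonneg)

lemma coefficient_gradient_le_rhs:
  assumes fr: "sframe S1 S2" and symH: "\<And>a b. H a b = H b a" and t0: "tcoord p \<ge> 0"
    and J: "J \<in> MI n" and K: "K \<in> MI n" and len: "length As + length J + (length K - 1) \<le> n"
  defines "Q \<equiv> foldr tensor_action As (ZH J H)"
  shows "(66 * tnorm Q p / (1 + tcoord p + \<bar>qcoord p\<bar>) + 40 * normLL Q p / (1 + \<bar>qcoord p\<bar>))
      * gradnorm (ZI K \<phi>) p \<le> 1280 * 4 ^ n * (rhs_t n H \<phi> p + rhs_q S1 S2 n H \<phi> p)"
proof -
  have "tnorm Q p * gradnorm (ZI K \<phi>) p / (1 + tcoord p + \<bar>qcoord p\<bar>) \<le> 4 ^ n * rhs_t n H \<phi> p"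
    using len by (intro term_le_rhs_t[OF t0 J K]) (auto simp: Q_def tnorm_foldr_tensor_action_le_pow)
  moreover have "normLL Q p * gradnorm (ZI K \<phi>) p / (1 + \<bar>qcoord p\<bar>) \<le> (32 * 4 ^ n) * rhs_q S1 S2 n H \<phi> p"
    unfolding Q_def by (intro term_le_rhs_q[OF K] normLL_foldr_tensor_action_le[OF fr symH J len]) simp
  moreover have "0 \<le> 4 ^ n * rhs_t n H \<phi> p" using rhs_t_nonneg[OF t0] by simp
  moreover have "(66 * tnorm Q p / (1 + tcoord p + \<bar>qcoord p\<bar>) + 40 * normLL Q p / (1 + \<bar>qcoord p\<bar>))
      * gradnorm (ZI K \<phi>) p
      = 66 * (tnorm Q p * gradnorm (ZI K \<phi>) p / (1 + tcoord p + \<bar>qcoord p\<bar>))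
        + 40 * (normLL Q p * gradnorm (ZI K \<phi>) p / (1 + \<bar>qcoord p\<bar>))"
    by (simp add: distrib_right)
  moreover have "1280 * 4 ^ n * (rhs_t n H \<phi> p + rhs_q S1 S2 n H \<phi> p)
      = 1280 * (4 ^ n * rhs_t n H \<phi> p) + 1280 * (4 ^ n * rhs_q S1 S2 n H \<phi> p)"
    by (simp add: algebra_simps)
  ultimately show ?thesis by linarith
qed

lemma expansion_term_bound:
  assumes fr: "sframe S1 S2" and sH: "\<And>a b. smooth (H a b)" and symH: "\<And>a b. H a b = H b a"
    and s\<phi>: "smooth \<phi>" and t0: "tcoord p \<ge> 0"
    and len: "length As + length J + length K = n" and nontrivial: "As \<noteq> [] \<or> J \<noteq> []"
    and JZ: "set J \<subseteq> Zset" and KZ: "set K \<subseteq> Zset"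
  shows "\<bar>expansion_term H \<phi> (As, J, K) p\<bar>
    \<le> (1 + 8 * real (card Zset)) * (1 + real (card Zset)) * (1280 * 4 ^ n)
      * (rhs_t n H \<phi> p + rhs_q S1 S2 n H \<phi> p)"
proof -
  define Q where "Q = foldr tensor_action As (ZH J H)"
  define F where "F = 66 * tnorm Q p / (1 + tcoord p + \<bar>qcoord p\<bar>) + 40 * normLL Q p / (1 + \<bar>qcoord p\<bar>)"
  define B where "B = 1280 * 4 ^ n * (rhs_t n H \<phi> p + rhs_q S1 S2 n H \<phi> p)"
  have J: "J \<in> MI n" using JZ len unfolding MI_def by auto
  have F_nonneg: "0 \<le> F" unfolding F_def using t0 tnorm_nonneg normLL_nonneg by simp
  have "length As + length J \<ge> 1" using nontrivial by (cases As; cases J) auto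
  then have K: "K \<in> MI n" and ZK: "\<And>Z. Z \<in> Zset \<Longrightarrow> Z # K \<in> MI n"
    using KZ len unfolding MI_def by auto
  have "F * Zgradnorm (ZI K \<phi>) p = F * gradnorm (ZI K \<phi>) p + (\<Sum>Z\<in>Zset. F * gradnorm (ZI (Z # K) \<phi>) p)"
    unfolding Zgradnorm_def by (simp add: ZI_Cons distrib_left sum_distrib_left)
  also have "\<dots> \<le> B + (\<Sum>Z\<in>Zset. B)"
    unfolding F_def B_def Q_def using len K ZK
    by (intro add_mono sum_mono coefficient_gradient_le_rhs[OF fr symH t0 J]) auto
  finally have FZ: "F * Zgradnorm (ZI K \<phi>) p \<le> (1 + real (card Zset)) * B"
    by (simp add: algebra_simps)
  have "\<bar>expansion_term H \<phi> (As, J, K) p\<bar> \<le> F * (\<Sum>c\<in>UNIV. Znorm (pd c (ZI K \<phi>)) p)"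
    unfolding expansion_term_def F_def Q_def by (simp add: second_order_op_bound smooth_ZI s\<phi> t0)
  also have "\<dots> \<le> F * ((1 + 8 * real (card Zset)) * Zgradnorm (ZI K \<phi>) p)"
    by (intro mult_left_mono sum_Znorm_pd_le smooth_ZI s\<phi> F_nonneg)
  also have "\<dots> = (1 + 8 * real (card Zset)) * (F * Zgradnorm (ZI K \<phi>) p)"
    by (simp add: algebra_simps)
  also have "\<dots> \<le> (1 + 8 * real (card Zset)) * ((1 + real (card Zset)) * B)"
    by (intro mult_left_mono FZ) simp
  finally show ?thesis unfolding B_def by (simp add: algebra_simps)
qed

lemma abs_sum_list_le_length_mult:
  "(\<And>t. t \<in> set ts \<Longrightarrow> \<bar>f t\<bar> \<le> B) \<Longrightarrow> \<bar>\<Sum>t\<leftarrow>ts. f t\<bar> \<le> real (length ts) * (B :: real)"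
  by (induction ts) (auto simp: algebra_simps intro: order_trans[OF abs_triangle_ineq] add_mono)

theorem proposition5p3:
  fixes S1 S2 :: "pt \<Rightarrow> pt" and I :: "zf list"
  assumes "sframe S1 S2" and "set I \<subseteq> Zset"
  shows "\<exists>C. \<forall>(H :: 4 \<Rightarrow> 4 \<Rightarrow> pt \<Rightarrow> real) (\<phi> :: pt \<Rightarrow> real) p.
    (\<forall>a b. smooth (H a b) \<and> H a b = H b a) \<longrightarrow> smooth \<phi> \<longrightarrow> tcoord p \<ge> 0 \<longrightarrow>
    \<bar>boxt H (ZI I \<phi>) p - hatZI I (boxt H \<phi>) p\<bar>
    \<le> C * ( 1 / (1 + tcoord p + \<bar>qcoord p\<bar>) *
          (\<Sum>K\<in>MI (length I). \<Sum>J\<in>{J\<in>MI (length I). length J + (length K - 1) \<le> length I}.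
              tnorm (ZH J H) p * gradnorm (ZI K \<phi>) p)
        + 1 / (1 + \<bar>qcoord p\<bar>) *
          (\<Sum>K\<in>MI (length I).
             ((\<Sum>J\<in>{J\<in>MI (length I). length J + (length K - 1) \<le> length I}. normLL (ZH J H) p)
            + (\<Sum>J\<in>{J\<in>MI (length I). length J + (length K - 1) + 1 \<le> length I}. normLT S1 S2 (ZH J H) p)
            + (\<Sum>J\<in>{J\<in>MI (length I). length J + (length K - 1) + 2 \<le> length I}. tnorm (ZH J H) p))
            * gradnorm (ZI K \<phi>) p))"
proof -
  obtain rest where split: "splittings I = ([], [], I) # rest"
    and nontrivial: "\<forall>(As, J, K) \<in> set rest. As \<noteq> [] \<or> J \<noteq> []"
    using splittings_eq_Cons by blast
  let ?C = "(1 + 8 * real (card Zset)) * (1 + real (card Zset)) * (1280 * 4 ^ length I)"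
  have "\<bar>boxt H (ZI I \<phi>) p - hatZI I (boxt H \<phi>) p\<bar>
      \<le> real (length rest) * ?C * (rhs_t (length I) H \<phi> p + rhs_q S1 S2 (length I) H \<phi> p)"
    if H: "\<forall>a b. smooth (H a b) \<and> H a b = H b a" and s\<phi>: "smooth \<phi>" and t0: "tcoord p \<ge> 0"
    for H \<phi> p
  proof -
    have "\<bar>expansion_term H \<phi> t p\<bar> \<le> ?C * (rhs_t (length I) H \<phi> p + rhs_q S1 S2 (length I) H \<phi> p)"
      if "t \<in> set rest" for t
    proof (cases t)
      case (fields As J K)
      with that split nontrivial have "(As, J, K) \<in> set (splittings I)" "As \<noteq> [] \<or> J \<noteq> []"
        by auto
      then show ?thesis unfolding fields using splittings_lengths[of As J K I] assms H
        by (intro expansion_term_bound[OF assms(1) _ _ s\<phi> t0]) auto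
    qed
    then show ?thesis
      using abs_sum_list_le_length_mult[of rest] boxt_commutator_eq[OF _ s\<phi> split] H
      by (simp add: mult.assoc)
  qed
  then show ?thesis unfolding rhs_t_def rhs_q_def null_weight_def by blast
qed

end
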